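(* Let $X$ and $Y$ be represented spaces, let $R\subseteq\mathbb{N}^\mathbb{N}$ be endowed with a Borel measure $\mu_R$, let $I$ be an interval and let $f:\subseteq X\rightrightarrows Y$ be a multi-valued function. Then $f\le_W \mathsf{P}_I\mathsf{C}_R$ if and only if $f$ is Las Vegas computable over $R$ with measure in $I$.
   Context: A represented space is a pair $(X,\delta_X)$ where $\delta_X:\subseteq\mathbb{N}^\mathbb{N}\to X$ is a partial surjection; subsets of $\mathbb{N}^\mathbb{N}$ are represented by the identity, and pairs by the standard pairing $\langle p,q\rangle(2k)=p(k)$, $\langle p,q\rangle(2k+1)=q(k)$. Problems are partial multi-valued functions $f:\subseteq X\rightrightarrows Y$. A realizer of $f$ is a partial $F:\subseteq\mathbb{N}^\mathbb{N}\to\mathbb{N}^\mathbb{N}$ with $\delta_Y F(p)\in f(\delta_X(p))$ for all $p\in\mathrm{dom}(f\circ\delta_X)$. $f$ is Weihrauch reducible to $g$, written $f\le_W g$, if there are computable partial $H,K:\subseteq\mathbb{N}^\mathbb{N}\to\mathbb{N}^\mathbb{N}$ such that $p\mapsto H\langle p,GK(p)\rangle$ realizes $f$ for every realizer $G$ of $g$. Sierpiński space $\mathbb{S}=\{0,1\}$ is represented by $\delta_{\mathbb S}(p)=0$ if $p$ is the constant zero sequence and $\delta_{\mathbb S}(p)=1$ otherwise. For a represented space $X$, $\mathcal{A}_-(X)$ denotes the set of closed subsets of $X$ represented by negative information: a name of $A$ is a name of the characteristic function $X\to\mathbb S$ of $X\setminus A$. An interval is an interval of reals with open or closed endpoints,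 where $\infty$ is allowed as (open or closed) right endpoint, but $[\infty,\infty]$ is not an interval. If $X$ carries a Borel measure $\mu$ and $I$ is an interval, probabilistic choice $\mathsf{P}_I\mathsf{C}_X:\subseteq\mathcal{A}_-(X)\rightrightarrows X$, $A\mapsto A$, is defined on all nonempty closed $A\subseteq X$ with $\mu(A)\in I$ (any point of $A$ is an admissible output). Las Vegas computability: for $R\subseteq\mathbb{N}^\mathbb{N}$ with Borel measure $\mu_R$ and interval $I$, $f:\subseteq X\rightrightarrows Y$ is Las Vegas computable over $R$ with measure in $I$ if there exist computable $F_1,F_2:\subseteq\mathbb{N}^\mathbb{N}\to\mathbb{N}^\mathbb{N}$ such that $\langle p,r\rangle\in\mathrm{dom}(F_2)$ for all $p\in\mathrm{dom}(f\delta_X)$, $r\in R$, and for each $p\in\mathrm{dom}(f\delta_X)$: (1) $S_p:=\{r\in R:\delta_{\mathbb S}F_2\langle p,r\rangle=0\}$ is non-empty and $\mu_R(S_p)\in I$; (2) $\delta_YF_1\langle p,r\rangle\in f\delta_X(p)$ for all $r\in S_p$. *)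

theory Defs
  imports "HOL-Analysis.Analysis" "HOL-Library.Nat_Bijection"
begin

type_synonym baire = "nat \<Rightarrow> nat"

datatype recf = Zr | Sc | Pj nat | Orc | Cn recf "recf list" | Pr recf recf | Mn recf

inductive oev :: "baire \<Rightarrow> recf \<Rightarrow> nat list \<Rightarrow> nat \<Rightarrow> bool" for a :: baire where
  oev_Zr: "oev a Zr xs 0"
| oev_Sc: "oev a Sc (x # xs) (Suc x)"
| oev_Pj: "i < length xs \<Longrightarrow> oev a (Pj i) xs (xs ! i)"
| oev_Orc: "oev a Orc (x # xs) (a x)"
| oev_Cn: "length ys = length gs \<Longrightarrow> \<forall>i<length gs. oev a (gs ! i) xs (ys ! i)
           \<Longrightarrow> oev a f ys z \<Longrightarrow> oev a (Cn f gs) xs z"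
| oev_Pr0: "oev a f xs y \<Longrightarrow> oev a (Pr f g) (0 # xs) y"
| oev_PrS: "oev a (Pr f g) (n # xs) y \<Longrightarrow> oev a g (n # y # xs) z \<Longrightarrow> oev a (Pr f g) (Suc n # xs) z"
| oev_Mn: "oev a f (n # xs) 0 \<Longrightarrow> \<forall>m<n. \<exists>y. y \<noteq> 0 \<and> oev a f (m # xs) y \<Longrightarrow> oev a (Mn f) xs n"

definition computable :: "(baire \<Rightarrow> baire option) \<Rightarrow> bool" where
  "computable F \<longleftrightarrow> (\<exists>c. \<forall>p q. F p = Some q \<longrightarrow> (\<forall>n. oev p c [n] (q n)))"

definition pair :: "baire \<Rightarrow> baire \<Rightarrow> baire" where
  "pair p q = (\<lambda>n. if even n then p (n div 2) else q (n div 2))"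

definition represented :: "'x set \<Rightarrow> (baire \<Rightarrow> 'x option) \<Rightarrow> bool" where
  "represented X \<delta> \<longleftrightarrow> (\<forall>p x. \<delta> p = Some x \<longrightarrow> x \<in> X) \<and> (\<forall>x\<in>X. \<exists>p. \<delta> p = Some x)"

text \<open>Multi-valued functions \<open>f :\<subseteq> X \<rightrightarrows> Y\<close> are set-valued; \<open>dom f = {x. f x \<noteq> {}}\<close>.\<close>
definition realizes :: "(baire \<Rightarrow> 'x option) \<Rightarrow> (baire \<Rightarrow> 'y option) \<Rightarrow> ('x \<Rightarrow> 'y set)
    \<Rightarrow> (baire \<Rightarrow> baire option) \<Rightarrow> bool" where
  "realizes \<delta>X \<delta>Y f F \<longleftrightarrow>
     (\<forall>p x. \<delta>X p = Some x \<and> f x \<noteq> {} \<longrightarrow> (\<exists>q y. F p = Some q \<and> \<delta>Y q = Some y \<and> y \<in> f x))"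

definition weihrauch_le ::
  "(baire \<Rightarrow> 'x option) \<Rightarrow> (baire \<Rightarrow> 'y option) \<Rightarrow> ('x \<Rightarrow> 'y set) \<Rightarrow>
   (baire \<Rightarrow> 'z option) \<Rightarrow> (baire \<Rightarrow> 'w option) \<Rightarrow> ('z \<Rightarrow> 'w set) \<Rightarrow> bool" where
  "weihrauch_le \<delta>X \<delta>Y f \<delta>Z \<delta>W g \<longleftrightarrow>
     (\<exists>H K. computable H \<and> computable K \<and>
        (\<forall>G. realizes \<delta>Z \<delta>W g G \<longrightarrow>
              realizes \<delta>X \<delta>Y f
                (\<lambda>p. case K p of None \<Rightarrow> None
                      | Some k \<Rightarrow> (case G k of None \<Rightarrow> None | Some q \<Rightarrow> H (pair p q)))))"

definition delta_S :: "baire \<Rightarrow> bool" where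
  "delta_S p \<longleftrightarrow> p \<noteq> (\<lambda>_. 0)"   (* True = 1, False = 0 *)

definition delta_sub :: "baire set \<Rightarrow> baire \<Rightarrow> baire option" where
  "delta_sub R p = (if p \<in> R then Some p else None)"

text \<open>Standard enumeration \<open>\<eta>\<close> of continuous partial functions on Baire space
  (Weihrauch): \<open>\<eta>_p(q)(n) = p\<langle>n, q|k\<rangle> - 1\<close> for the least k with \<open>p\<langle>n,q|k\<rangle> > 0\<close>.\<close>
definition seqcode :: "baire \<Rightarrow> nat \<Rightarrow> nat" where
  "seqcode q k = list_encode (map q [0..<k])"

definition eta :: "baire \<Rightarrow> baire \<Rightarrow> baire option" where
  "eta p q = (if \<forall>n. \<exists>k. 0 < p (prod_encode (n, seqcode q k))
      then Some (\<lambda>n. p (prod_encode (n, seqcode q (LEAST k. 0 < p (prod_encode (n, seqcode q k))))) - 1)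
      else None)"

text \<open>Function space representation of \<open>R \<rightarrow> \<S>\<close>: p names h iff \<open>\<eta>_p\<close> realizes h.
  A name of \<open>A \<in> \<A>_-(R)\<close> is a name of the characteristic function of \<open>R - A\<close>.\<close>
definition delta_closed :: "baire set \<Rightarrow> baire \<Rightarrow> baire set option" where
  "delta_closed R p =
     (if \<forall>r\<in>R. eta p r \<noteq> None
      then Some {r \<in> R. \<not> delta_S (the (eta p r))}
      else None)"

definition is_interval_ext :: "ereal set \<Rightarrow> bool" where
  "is_interval_ext I \<longleftrightarrow> (\<exists>a::real. \<exists>b::ereal. b \<noteq> -\<infinity> \<and>
      I \<in> {{ereal a..b}, {ereal a<..b}, {ereal a..<b}, {ereal a<..<b}})"

definition PC :: "baire measure \<Rightarrow> baire set \<Rightarrow> ereal set \<Rightarrow> baire set \<Rightarrow> baire set" where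
  "PC \<mu> R I A = (if A \<noteq> {} \<and> A \<subseteq> R \<and> closedin (top_of_set R) A \<and> enn2ereal (emeasure \<mu> A) \<in> I
                 then A else {})"

definition las_vegas :: "(baire \<Rightarrow> 'x option) \<Rightarrow> (baire \<Rightarrow> 'y option) \<Rightarrow> ('x \<Rightarrow> 'y set)
    \<Rightarrow> baire set \<Rightarrow> baire measure \<Rightarrow> ereal set \<Rightarrow> bool" where
  "las_vegas \<delta>X \<delta>Y f R \<mu> I \<longleftrightarrow>
     (\<exists>F1 F2. computable F1 \<and> computable F2 \<and>
        (\<forall>p x. \<delta>X p = Some x \<and> f x \<noteq> {} \<longrightarrow>
           (\<forall>r\<in>R. F2 (pair p r) \<noteq> None) \<and>
           (let S = {r \<in> R. \<not> delta_S (the (F2 (pair p r)))} in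
              S \<noteq> {} \<and> enn2ereal (emeasure \<mu> S) \<in> I \<and>
              (\<forall>r\<in>S. \<exists>q y. F1 (pair p r) = Some q \<and> \<delta>Y q = Some y \<and> y \<in> f x))))"

end

theory Submission
  imports Defs
begin

(* Both directions are explicit program transformations.
   (W \<Rightarrow> LV) Given a reduction (H, K), the Las Vegas algorithm is F1 = H and
     F2 <p, r> = eta_{K p}(r): the success set of <p, r> is exactly the closed set named by
     K p.  Computability of F2 needs only a search for the first "use" in the definition of
     eta (eta_apply_prog).  Correctness uses realizers of P_I C_R that return an arbitrary
     prescribed point of the set.
   (LV \<Rightarrow> W) Given (F1, F2), the reduction is H = F1 and K p = a name of r \<mapsto> F2 <p, r>.
     That name is computed by running the program of F2 for a bounded number of steps on
     finite prefixes of r; its success set is closed because a nonzero output is decided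
     by a finite prefix.  This requires a step-bounded interpreter for oracle programs that
     is itself computable (beval_prog), the technical core of the file. *)

inductive_cases oevZrE: "oev a Zr xs y"
inductive_cases oevScE: "oev a Sc xs y"
inductive_cases oevPjE: "oev a (Pj i) xs y"
inductive_cases oevOrcE: "oev a Orc xs y"
inductive_cases oevCnE: "oev a (Cn f gs) xs y"
inductive_cases oevPr0E: "oev a (Pr f g) (0#xs) y"
inductive_cases oevPrSE: "oev a (Pr f g) (Suc n#xs) y"
inductive_cases oevMnE: "oev a (Mn f) xs y"

lemma oev_deterministic: "oev a c xs y \<Longrightarrow> oev a c xs y' \<Longrightarrow> y = y'"
proof (induction arbitrary: y' rule: oev.induct)
  case (oev_Zr xs) then show ?case by (auto elim: oevZrE)
next
  case (oev_Sc x xs) then show ?case by (auto elim: oevScE)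
next
  case (oev_Pj i xs) then show ?case by (auto elim: oevPjE)
next
  case (oev_Orc x xs) then show ?case by (auto elim: oevOrcE)
next
  case (oev_Cn ys gs xs f z)
  from oev_Cn.prems obtain ys' where l: "length ys' = length gs"
    and h: "\<forall>i<length gs. oev a (gs ! i) xs (ys' ! i)" and fz: "oev a f ys' y'"
    by (auto elim: oevCnE)
  have "ys = ys'"
  proof (rule nth_equalityI)
    show "length ys = length ys'" using oev_Cn(1) l by simp
    fix i assume "i < length ys"
    then have i: "i < length gs" using oev_Cn(1) by simp
    then have "\<And>y'. oev a (gs ! i) xs y' \<Longrightarrow> ys ! i = y'" using oev_Cn.IH(1) by blast
    then show "ys ! i = ys' ! i" using h i by blast
  qed
  then show ?case using oev_Cn.IH(2) fz by auto
next
  case (oev_Pr0 f xs y g)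
  from oev_Pr0.prems have "oev a f xs y'" by (auto elim: oevPr0E)
  then show ?case using oev_Pr0.IH by blast
next
  case (oev_PrS f g n xs y z)
  from oev_PrS.prems obtain y2 where 1: "oev a (Pr f g) (n#xs) y2" and 2: "oev a g (n#y2#xs) y'"
    by (auto elim: oevPrSE)
  from 1 oev_PrS.IH(1) have "y = y2" by blast
  then show ?case using 2 oev_PrS.IH(2) by blast
next
  case (oev_Mn f n xs)
  from oev_Mn.prems obtain n' where y': "y' = n'" and z: "oev a f (n'#xs) 0"
    and b: "\<forall>m<n'. \<exists>y. y \<noteq> 0 \<and> oev a f (m # xs) y" by (auto elim: oevMnE)
  have "\<not> n < n'"
  proof
    assume "n < n'" then obtain y where y: "y \<noteq> 0" "oev a f (n#xs) y" using b by auto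
    have "\<And>y'. oev a f (n # xs) y' \<Longrightarrow> 0 = y'" by (rule oev_Mn.IH(1))
    then show False using y by metis
  qed
  moreover have "\<not> n' < n"
  proof
    assume "n' < n" then obtain y where "y \<noteq> 0" "\<And>y'. oev a f (n'#xs) y' \<Longrightarrow> y = y'"
      using oev_Mn.IH(2) by blast
    then show False using z by metis
  qed
  ultimately show ?case using y' by simp
qed

lemma oev_Cn1: "oev a g xs u \<Longrightarrow> oev a f [u] v \<Longrightarrow> oev a (Cn f [g]) xs v"
  by (rule oev_Cn[of "[u]"]) auto

lemma oev_Cn2: "oev a g1 xs u1 \<Longrightarrow> oev a g2 xs u2 \<Longrightarrow> oev a f [u1, u2] v \<Longrightarrow> oev a (Cn f [g1, g2]) xs v"
  by (rule oev_Cn[of "[u1, u2]"]) (auto simp: less_Suc_eq)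

definition computes :: "nat \<Rightarrow> recf \<Rightarrow> (baire \<Rightarrow> nat list \<Rightarrow> nat) \<Rightarrow> bool" where
  "computes n c F \<longleftrightarrow> (\<forall>a xs. length xs = n \<longrightarrow> oev a c xs (F a xs))"

lemma computes_oev: "computes n c F \<Longrightarrow> length xs = n \<Longrightarrow> oev a c xs (F a xs)"
  unfolding computes_def by blast

lemma computes_cong: "computes n c F \<Longrightarrow> (\<And>a xs. length xs = n \<Longrightarrow> F a xs = G a xs) \<Longrightarrow> computes n c G"
  unfolding computes_def by auto

text \<open>Congruence with the arity stated as an equation, convenient when it is a numeral.\<close>
lemma computes_cong2:
  "computes n c F \<Longrightarrow> n = m \<Longrightarrow> (\<And>a xs. length xs = m \<Longrightarrow> F a xs = G a xs) \<Longrightarrow> computes m c G"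
  unfolding computes_def by auto

lemma computes_Zr: "computes n Zr (\<lambda>a xs. 0)"
  unfolding computes_def by (auto intro: oev_Zr oev_Pj)

lemma computes_Pj: "i < n \<Longrightarrow> computes n (Pj i) (\<lambda>a xs. xs ! i)"
  unfolding computes_def by (auto intro: oev_Zr oev_Pj)

lemma computes_Sc: "computes (Suc n) Sc (\<lambda>a xs. Suc (hd xs))"
  unfolding computes_def
proof (intro allI impI)
  fix a :: baire and xs :: "nat list" assume "length xs = Suc n"
  then obtain x ys where "xs = x # ys" by (cases xs) auto
  then show "oev a Sc xs (Suc (hd xs))" by (simp add: oev_Sc)
qed

lemma computes_Orc: "computes (Suc n) Orc (\<lambda>a xs. a (hd xs))"
  unfolding computes_def
proof (intro allI impI)
  fix a :: baire and xs :: "nat list" assume "length xs = Suc n"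
  then obtain x ys where "xs = x # ys" by (cases xs) auto
  then show "oev a Orc xs (a (hd xs))" by (simp add: oev_Orc)
qed

lemma computes_Cn: "list_all2 (computes n) gs Gs \<Longrightarrow> computes (length gs) f F \<Longrightarrow>
   computes n (Cn f gs) (\<lambda>a xs. F a (map (\<lambda>G. G a xs) Gs))"
  unfolding computes_def
proof (intro allI impI)
  fix a :: baire and xs :: "nat list" assume l: "list_all2 (\<lambda>g G. \<forall>a xs. length xs
      = n \<longrightarrow> oev a g xs (G a xs)) gs Gs"
    and f: "\<forall>a xs. length xs = length gs \<longrightarrow> oev a f xs (F a xs)" and n: "length xs = n"
  have lg: "length Gs = length gs" using l by (simp add: list_all2_lengthD)
  show "oev a (Cn f gs) xs (F a (map (\<lambda>G. G a xs) Gs))"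
  proof (rule oev_Cn)
    show "length (map (\<lambda>G. G a xs) Gs) = length gs" using lg by simp
    show "\<forall>i<length gs. oev a (gs ! i) xs (map (\<lambda>G. G a xs) Gs ! i)"
      using list_all2_nthD[OF l] n lg by auto
    show "oev a f (map (\<lambda>G. G a xs) Gs) (F a (map (\<lambda>G. G a xs) Gs))" using f lg by simp
  qed
qed

lemma computes_Pr: "computes n f F \<Longrightarrow> computes (Suc (Suc n)) g G \<Longrightarrow>
  computes (Suc n) (Pr f g) (\<lambda>a xs. rec_nat (F a (tl xs)) (\<lambda>k y. G a (k # y # tl xs)) (hd xs))"
  unfolding computes_def
proof (intro allI impI)
  fix a :: baire and xs :: "nat list" assume f: "\<forall>a xs. length xs = n \<longrightarrow> oev a f xs (F a xs)"
    and g: "\<forall>a xs. length xs = Suc (Suc n) \<longrightarrow> oev a g xs (G a xs)" and l: "length xs = Suc n"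
  then obtain x :: nat and ys where xs: "xs = x # ys" and ly: "length ys = n" by (auto simp: length_Suc_conv)
  have "oev a (Pr f g) (x # ys) (rec_nat (F a ys) (\<lambda>k y. G a (k # y # ys)) x)"
  proof (induction x)
    case 0 show ?case using f ly by (simp add: oev_Pr0)
  next
    case (Suc x) show ?case using g ly by (simp add: oev_PrS[OF Suc])
  qed
  then show "oev a (Pr f g) xs (rec_nat (F a (tl xs)) (\<lambda>k y. G a (k # y # tl xs)) (hd xs))"
    using xs by simp
qed

lemma oev_Mn_Least: "(\<And>m. oev a f (m # xs) (F m)) \<Longrightarrow> F n = 0 \<Longrightarrow> oev a (Mn f) xs (LEAST m. F m = 0)"
proof (rule oev_Mn)
  assume h: "\<And>m. oev a f (m # xs) (F m)" and z: "F n = 0"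
  have "F (LEAST m. F m = 0) = 0" using z by (rule LeastI)
  then show "oev a f ((LEAST m. F m = 0) # xs) 0" using h by metis
  show "\<forall>m<(LEAST m. F m = 0). \<exists>y. y \<noteq> 0 \<and> oev a f (m # xs) y"
    using h not_less_Least by blast
qed

lemma computes_Mn: "computes (Suc n) f F \<Longrightarrow> (\<And>a xs. length xs = n \<Longrightarrow> \<exists>m. F a (m # xs) = 0) \<Longrightarrow>
  computes n (Mn f) (\<lambda>a xs. LEAST m. F a (m # xs) = 0)"
  unfolding computes_def
proof (intro allI impI)
  fix a :: baire and xs :: "nat list"
  assume f: "\<forall>a xs. length xs = Suc n \<longrightarrow> oev a f xs (F a xs)"
    and e: "\<And>a xs. length xs = n \<Longrightarrow> \<exists>m. F a (m # xs) = 0" and l: "length xs = n"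
  obtain m where "F a (m # xs) = 0" using e l by blast
  moreover have "\<And>m. oev a f (m # xs) (F a (m # xs))" using f l by simp
  ultimately show "oev a (Mn f) xs (LEAST m. F a (m # xs) = 0)"
    using oev_Mn_Least[of a f xs "\<lambda>m. F a (m # xs)"] by blast
qed

lemma len1E: "length xs = Suc 0 \<Longrightarrow> (\<And>x. xs = [x] \<Longrightarrow> P) \<Longrightarrow> P"
  by (cases xs) auto
lemma len2E: "length xs = 2 \<Longrightarrow> (\<And>x y. xs = [x, y] \<Longrightarrow> P) \<Longrightarrow> P"
  by (cases xs; cases "tl xs") (auto simp: numeral_2_eq_2)

lemma computes_Sc1: "computes 1 Sc (\<lambda>a xs. Suc (xs ! 0))"
  using computes_Sc[of 0] by (rule computes_cong2) (auto elim!: len1E)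

lemma computes_Orc1: "computes 1 Orc (\<lambda>a xs. a (xs ! 0))"
  using computes_Orc[of 0] by (rule computes_cong2) (auto elim!: len1E)

lemma computes_Cn1: "computes 1 f F \<Longrightarrow> computes n g G \<Longrightarrow> computes n (Cn f [g]) (\<lambda>a xs. F a [G a xs])"
  using computes_Cn[of n "[g]" "[G]" f F] by simp

lemma computes_Cn2: "computes 2 f F \<Longrightarrow> computes n g G \<Longrightarrow> computes n h H
    \<Longrightarrow> computes n (Cn f [g, h]) (\<lambda>a xs. F a [G a xs, H a xs])"
  using computes_Cn[of n "[g, h]" "[G, H]" f F] by (simp add: numeral_2_eq_2)

lemma computes_Cn3: "computes 3 f F \<Longrightarrow> computes n g G \<Longrightarrow> computes n h H \<Longrightarrow> computes n k K \<Longrightarrow>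
   computes n (Cn f [g, h, k]) (\<lambda>a xs. F a [G a xs, H a xs, K a xs])"
  using computes_Cn[of n "[g, h, k]" "[G, H, K]" f F] by (simp add: numeral_3_eq_3)

lemma computes_Pr': "computes n f F \<Longrightarrow> computes m g G \<Longrightarrow> m = Suc (Suc n) \<Longrightarrow>
  computes (Suc n) (Pr f g) (\<lambda>a xs. rec_nat (F a (tl xs)) (\<lambda>k y. G a (k # y # tl xs)) (hd xs))"
  using computes_Pr by blast

section \<open>A library of total programs\<close>

fun const_prog :: "nat \<Rightarrow> recf" where
  "const_prog 0 = Zr" | "const_prog (Suc k) = Cn Sc [const_prog k]"

lemma computes_const: "computes n (const_prog k) (\<lambda>a xs. k)"
  by (induction k) (auto intro: computes_Zr dest: computes_Cn1[OF computes_Sc1])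

definition add_prog :: recf where
  "add_prog = Pr (Pj 0) (Cn Sc [Pj 1])"
lemma computes_add: "computes 2 add_prog (\<lambda>a xs. xs ! 0 + xs ! 1)"
proof -
  have g: "computes 3 (Cn Sc [Pj 1]) (\<lambda>a xs. Suc (xs ! 1))"
    using computes_Cn1[OF computes_Sc1 computes_Pj[of 1 3]] by simp
  have *: "rec_nat y (\<lambda>k r. Suc r) x = x + y" for x y :: nat by (induction x) auto
  show ?thesis unfolding add_prog_def
    by (rule computes_cong2[OF computes_Pr'[OF computes_Pj[of 0 1] g]]) (auto elim!: len2E simp: *)
qed

definition mult_prog :: recf where
  "mult_prog = Pr Zr (Cn add_prog [Pj 1, Pj 2])"
lemma computes_mult: "computes 2 mult_prog (\<lambda>a xs. xs ! 0 * xs ! 1)"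
proof -
  have g: "computes 3 (Cn add_prog [Pj 1, Pj 2]) (\<lambda>a xs. xs ! 1 + xs ! 2)"
    using computes_Cn2[OF computes_add computes_Pj[of 1 3] computes_Pj[of 2 3]] by simp
  have *: "rec_nat 0 (\<lambda>k r. r + y) x = x * y" for x y :: nat by (induction x) auto
  show ?thesis unfolding mult_prog_def
    by (rule computes_cong2[OF computes_Pr'[OF computes_Zr[of 1] g]]) (auto elim!: len2E simp: *)
qed

definition pred_prog :: recf where
  "pred_prog = Pr Zr (Pj 0)"
lemma computes_pred: "computes 1 pred_prog (\<lambda>a xs. xs ! 0 - 1)"
proof -
  have *: "rec_nat 0 (\<lambda>k r. k) x = x - 1" for x :: nat by (cases x) auto
  show ?thesis unfolding pred_prog_def
    by (rule computes_cong2[OF computes_Pr'[OF computes_Zr[of 0] computes_Pj[of 0 2]]])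
        (auto elim!: len1E simp: *)
qed

definition rsub_prog :: recf where
  "rsub_prog = Pr (Pj 0) (Cn pred_prog [Pj 1])"
definition sub_prog :: recf where
  "sub_prog = Cn rsub_prog [Pj 1, Pj 0]"
lemma computes_sub: "computes 2 sub_prog (\<lambda>a xs. xs ! 0 - xs ! 1)"
proof -
  have g: "computes 3 (Cn pred_prog [Pj 1]) (\<lambda>a xs. xs ! 1 - 1)"
    using computes_Cn1[OF computes_pred computes_Pj[of 1 3]] by simp
  have *: "rec_nat x (\<lambda>k r. r - Suc 0) y = x - y" for x y :: nat by (induction y) auto
  have s: "computes 2 rsub_prog (\<lambda>a xs. xs ! 1 - xs ! 0)" unfolding rsub_prog_def
    by (rule computes_cong2[OF computes_Pr'[OF computes_Pj[of 0 1] g]]) (auto elim!: len2E simp: *)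
  show ?thesis unfolding sub_prog_def
    using computes_Cn2[OF s computes_Pj[of 1 2] computes_Pj[of 0 2]] by simp
qed

definition sgn_prog :: recf where
  "sgn_prog = Pr Zr (const_prog 1)"
lemma computes_sgn: "computes 1 sgn_prog (\<lambda>a xs. if xs ! 0 = 0 then 0 else 1)"
proof -
  have *: "rec_nat 0 (\<lambda>k r. Suc 0) x = (if x = 0 then 0 else 1::nat)" for x :: nat by (cases x) auto
  show ?thesis unfolding sgn_prog_def
    by (rule computes_cong2[OF computes_Pr'[OF computes_Zr[of 0] computes_const[of 2 1]]])
        (auto elim!: len1E simp: *)
qed

definition is_zero_prog :: recf where
  "is_zero_prog = Pr (const_prog 1) Zr"
lemma computes_is_zero: "computes 1 is_zero_prog (\<lambda>a xs. if xs ! 0 = 0 then 1 else 0)"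
proof -
  have *: "rec_nat (Suc 0) (\<lambda>k r. 0) x = (if x = 0 then 1 else 0::nat)" for x :: nat by (cases x) auto
  show ?thesis unfolding is_zero_prog_def
    by (rule computes_cong2[OF computes_Pr'[OF computes_const[of 0 1] computes_Zr[of 2]]])
        (auto elim!: len1E simp: *)
qed

definition triangle_prog :: recf where
  "triangle_prog = Pr Zr (Cn add_prog [Pj 1, Cn Sc [Pj 0]])"
lemma computes_triangle: "computes 1 triangle_prog (\<lambda>a xs. triangle (xs ! 0))"
proof -
  have g: "computes 2 (Cn add_prog [Pj 1, Cn Sc [Pj 0]]) (\<lambda>a xs. xs ! 1 + Suc (xs ! 0))"
    using computes_Cn2[OF computes_add computes_Pj[of 1 2] computes_Cn1[OF computes_Sc1
        computes_Pj[of 0 2]]] by simp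
  have *: "rec_nat 0 (\<lambda>k y. Suc (y + k)) x = triangle x" for x :: nat by (induction x) auto
  show ?thesis unfolding triangle_prog_def
    by (rule computes_cong2[OF computes_Pr'[OF computes_Zr[of 0] g]]) (auto elim!: len1E simp: *)
qed

definition prod_encode_prog :: recf where
  "prod_encode_prog = Cn add_prog [Cn triangle_prog [Cn add_prog [Pj 0, Pj 1]], Pj 0]"
lemma computes_prod_encode: "computes 2 prod_encode_prog (\<lambda>a xs. prod_encode (xs ! 0, xs ! 1))"
  unfolding prod_encode_prog_def
  using computes_Cn2[OF computes_add computes_Cn1[OF computes_triangle computes_Cn2[OF computes_add
      computes_Pj[of 0 2] computes_Pj[of 1 2]]] computes_Pj[of 0 2]]
  by (simp add: prod_encode_def)

definition parity_prog :: recf where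
  "parity_prog = Pr Zr (Cn is_zero_prog [Pj 1])"
lemma computes_parity: "computes 1 parity_prog (\<lambda>a xs. xs ! 0 mod 2)"
proof -
  have g: "computes 2 (Cn is_zero_prog [Pj 1]) (\<lambda>a xs. if xs ! 1 = 0 then 1 else 0)"
    using computes_Cn1[OF computes_is_zero computes_Pj[of 1 2]] by simp
  have *: "rec_nat 0 (\<lambda>k y. if y = 0 then 1 else 0) x = x mod 2" for x :: nat
    by (induction x) (auto simp: mod_Suc)
  show ?thesis unfolding parity_prog_def
    by (rule computes_cong2[OF computes_Pr'[OF computes_Zr[of 0] g]]) (auto elim!: len1E simp: *)
qed

definition half_prog :: recf where
  "half_prog = Pr Zr (Cn add_prog [Pj 1, Cn parity_prog [Pj 0]])"
lemma computes_half: "computes 1 half_prog (\<lambda>a xs. xs ! 0 div 2)"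
proof -
  have g: "computes 2 (Cn add_prog [Pj 1, Cn parity_prog [Pj 0]]) (\<lambda>a xs. xs ! 1 + xs ! 0 mod 2)"
    using computes_Cn2[OF computes_add computes_Pj[of 1 2] computes_Cn1[OF computes_parity
        computes_Pj[of 0 2]]] by simp
  have *: "rec_nat 0 (\<lambda>k r. r + k mod 2) x = x div 2" for x :: nat
    by (induction x) (auto simp: div_Suc mod_Suc)
  show ?thesis unfolding half_prog_def
    by (rule computes_cong2[OF computes_Pr'[OF computes_Zr[of 0] g]]) (auto elim!: len1E simp: *)
qed

definition le_prog :: recf where
  "le_prog = Cn is_zero_prog [Cn sub_prog [Pj 0, Pj 1]]"
lemma computes_le: "computes 2 le_prog (\<lambda>a xs. if xs ! 0 \<le> xs ! 1 then 1 else 0)"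
  unfolding le_prog_def using computes_Cn1[OF computes_is_zero computes_Cn2[OF computes_sub
      computes_Pj[of 0 2] computes_Pj[of 1 2]]] by simp

text \<open>Decoding Cantor pairs: the level of \<open>m\<close> is the least \<open>s\<close> with \<open>m < triangle (Suc s)\<close>,
  found by minimisation; both components of \<open>prod_decode m\<close> are arithmetic in \<open>m\<close> and its level.\<close>
definition below_triangle_prog :: recf where
  "below_triangle_prog = Cn le_prog [Cn triangle_prog [Cn Sc [Pj 0]], Pj 1]"
definition level_prog :: recf where
  "level_prog = Mn below_triangle_prog"

lemma computes_level: "computes 1 level_prog (\<lambda>a xs. LEAST s. xs ! 0 < triangle (Suc s))"
proof -
  have "computes 2 below_triangle_prog (\<lambda>a xs. if triangle (Suc (xs ! 0)) \<le> xs ! 1 then 1 else 0)"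
    unfolding below_triangle_prog_def
        using computes_Cn2[OF computes_le computes_Cn1[OF computes_triangle computes_Cn1[OF
        computes_Sc1 computes_Pj[of 0 2]]] computes_Pj[of 1 2]]
    by simp
  then have t: "computes (Suc 1) below_triangle_prog (\<lambda>a xs. if triangle (Suc
      (xs ! 0)) \<le> xs ! 1 then 1 else 0)"
    unfolding Suc_1 .
  have ex: "\<exists>m. (if triangle (Suc ((m # xs) ! 0)) \<le> (m # xs) ! 1 then 1 else 0::nat) = 0"
    if "length xs = 1" for xs :: "nat list"
  proof -
    have "xs ! 0 < triangle (Suc (xs ! 0))" by (induction "xs ! 0") auto
    then show ?thesis by (intro exI[of _ "xs ! 0"]) simp
  qed
  show ?thesis unfolding level_prog_def
    by (rule computes_cong2[OF computes_Mn[OF t ex]]) (auto simp: not_le)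
qed

lemma prod_decode_least:
  "prod_decode m = (m - triangle (LEAST s. m < triangle (Suc s)),
                    (LEAST s. m < triangle (Suc s)) - (m - triangle (LEAST s. m < triangle (Suc s))))"
proof -
  define s where "s = (LEAST s. m < triangle (Suc s))"
  have e: "\<exists>s. m < triangle (Suc s)"
  proof
    show "m < triangle (Suc m)" by (induction m) auto
  qed
  have s1: "m < triangle (Suc s)" unfolding s_def using e by (rule LeastI_ex)
  have s2: "triangle s \<le> m"
  proof (cases s)
    case 0 then show ?thesis by simp
  next
    case (Suc s')
    then have "s' < s" by simp
    then have "\<not> m < triangle (Suc s')" unfolding s_def by (rule not_less_Least)
    then show ?thesis using Suc by simp
  qed
  define i where "i = m - triangle s"
  have m: "m = triangle s + i" using s2 i_def by simp
  have "i \<le> s" using s1 m by simp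
  then have "prod_decode m = (i, s - i)"
    unfolding m prod_decode_triangle_add by (subst prod_decode_aux.simps) simp
  then show ?thesis unfolding s_def[symmetric] i_def by simp
qed

definition decode_fst_prog :: recf where
  "decode_fst_prog = Cn sub_prog [Pj 0, Cn triangle_prog [level_prog]]"
lemma computes_decode_fst: "computes 1 decode_fst_prog (\<lambda>a xs. fst (prod_decode (xs ! 0)))"
  unfolding decode_fst_prog_def using computes_Cn2[OF computes_sub computes_Pj[of 0 1]
      computes_Cn1[OF computes_triangle computes_level]]
  by (simp add: prod_decode_least[of "_ ! 0"])

definition decode_snd_prog :: recf where
  "decode_snd_prog = Cn sub_prog [level_prog, decode_fst_prog]"
lemma computes_decode_snd: "computes 1 decode_snd_prog (\<lambda>a xs. snd (prod_decode (xs ! 0)))"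
  unfolding decode_snd_prog_def using computes_Cn2[OF computes_sub computes_level computes_decode_fst]
  by (simp add: prod_decode_least[of "_ ! 0"])

text \<open>Decoding list codes: \<open>code_tl\<close> is the tail map on codes; iterating it gives access to the
  \<open>i\<close>-th entry (\<open>code_nth\<close>) and decides whether \<open>i\<close> is below the length (\<open>code_in_range\<close>).\<close>
definition code_tl :: "nat \<Rightarrow> nat" where "code_tl c = snd (prod_decode (c - 1))"

lemma prod_decode_0: "prod_decode 0 = (0, 0)"
proof -
  have "prod_encode (0, 0) = 0" by (simp add: prod_encode_def)
  then show ?thesis by (metis prod_encode_inverse)
qed

lemma code_tl_list_encode: "code_tl (list_encode l) = list_encode (tl l)"
  by (cases l) (auto simp: code_tl_def prod_decode_0)

lemma code_tl_iter: "(code_tl ^^ i) (list_encode l) = list_encode (drop i l)"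
  by (induction i) (auto simp: code_tl_list_encode drop_Suc tl_drop)

definition code_tl_prog :: recf where
  "code_tl_prog = Cn decode_snd_prog [pred_prog]"
lemma computes_code_tl: "computes 1 code_tl_prog (\<lambda>a xs. code_tl (xs ! 0))"
  unfolding code_tl_prog_def code_tl_def using computes_Cn1[OF computes_decode_snd computes_pred] by simp

definition iter_tl_prog :: recf where
  "iter_tl_prog = Pr (Pj 0) (Cn code_tl_prog [Pj 1])"
lemma computes_iter_tl: "computes 2 iter_tl_prog (\<lambda>a xs. (code_tl ^^ (xs ! 0)) (xs ! 1))"
proof -
  have g: "computes 3 (Cn code_tl_prog [Pj 1]) (\<lambda>a xs. code_tl (xs ! 1))"
    using computes_Cn1[OF computes_code_tl computes_Pj[of 1 3]] by simp
  have *: "rec_nat c (\<lambda>k. code_tl) i = (code_tl ^^ i) c" for i c by (induction i) auto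
  show ?thesis unfolding iter_tl_prog_def
    by (rule computes_cong2[OF computes_Pr'[OF computes_Pj[of 0 1] g]]) (auto elim!: len2E simp: *)
qed

definition code_nth_prog :: recf where
  "code_nth_prog = Cn decode_fst_prog [Cn pred_prog [iter_tl_prog]]"
lemma computes_code_nth: "computes 2 code_nth_prog (\<lambda>a xs. fst (prod_decode ((code_tl ^^ (xs ! 0))
    (xs ! 1) - 1)))"
  unfolding code_nth_prog_def using computes_Cn1[OF computes_decode_fst computes_Cn1[OF
      computes_pred computes_iter_tl]] by simp

definition code_in_range_prog :: recf where
  "code_in_range_prog = Cn sgn_prog [iter_tl_prog]"
lemma computes_code_in_range: "computes 2 code_in_range_prog (\<lambda>a xs. if (code_tl ^^ (xs ! 0))
    (xs ! 1) = 0 then 0 else 1)"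
  unfolding code_in_range_prog_def using computes_Cn1[OF computes_sgn computes_iter_tl] by simp

lemma code_nth: "i < length l \<Longrightarrow> fst (prod_decode ((code_tl ^^ i) (list_encode l) - 1)) = l ! i"
  by (simp add: code_tl_iter Cons_nth_drop_Suc[symmetric])

lemma code_in_range: "((code_tl ^^ i) (list_encode l) = 0) \<longleftrightarrow> \<not> i < length l"
proof -
  have "list_encode (drop i l) = 0 \<longleftrightarrow> drop i l = []"
    by (cases "drop i l") auto
  then show ?thesis by (auto simp: code_tl_iter)
qed

section \<open>Step-bounded evaluation with partial oracle information\<close>

text \<open>\<open>beval t orc c xs\<close> evaluates \<open>c\<close> with minimisations searching only below \<open>t\<close>
  and with a partial oracle \<open>orc\<close>.\<close>

text \<open>\<open>search_code v t\<close> encodes a bounded search for the first zero of the partial function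
  \<open>v\<close> below \<open>t\<close>: \<open>0\<close> = all values so far defined and nonzero, \<open>1\<close> = an undefined
  value met first, \<open>m + 2\<close> = first zero at \<open>m\<close>.\<close>
fun search_code :: "(nat \<Rightarrow> nat option) \<Rightarrow> nat \<Rightarrow> nat" where
  "search_code v 0 = 0"
| "search_code v (Suc j) = (if search_code v j \<noteq> 0 then search_code v j
     else (case v j of None \<Rightarrow> 1 | Some y \<Rightarrow> if y = 0 then j + 2 else 0))"

lemma search_code_0: "search_code v t = 0 \<longleftrightarrow> (\<forall>m<t. \<exists>y. v m = Some (Suc y))"
proof (induction t)
  case 0 then show ?case by simp
next
  case (Suc t)
  show ?case
  proof (cases "search_code v t = 0")
    case True
    have e: "search_code v (Suc t) = 0 \<longleftrightarrow> (\<exists>y. v t = Some (Suc y))"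
    proof (cases "v t")
      case None then show ?thesis using True by simp
    next
      case (Some z) then show ?thesis using True by (cases z) auto
    qed
    have "(\<forall>m<Suc t. \<exists>y. v m = Some (Suc y)) \<longleftrightarrow> (\<forall>m<t. \<exists>y. v m = Some (Suc y)) \<and> (\<exists>y. v t = Some (Suc y))"
      by (auto simp: less_Suc_eq)
    then show ?thesis using e True Suc.IH by simp
  next
    case False
    then have "search_code v (Suc t) \<noteq> 0" by simp
    moreover have "\<not> (\<forall>m<Suc t. \<exists>y. v m = Some (Suc y))" using False Suc.IH by auto
    ultimately show ?thesis by simp
  qed
qed

lemma search_code_found: "search_code v t = Suc (Suc m)
    \<Longrightarrow> m < t \<and> v m = Some 0 \<and> (\<forall>m'<m. \<exists>y. v m' = Some (Suc y))"
proof (induction t)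
  case 0 then show ?case by simp
next
  case (Suc t)
  show ?case
  proof (cases "search_code v t = 0")
    case True
    then have all: "\<forall>m<t. \<exists>y. v m = Some (Suc y)" using search_code_0 by blast
    from Suc.prems True have "(case v t of None \<Rightarrow> 1 | Some y \<Rightarrow> if y = 0 then t + 2 else 0) = Suc (Suc m)"
      by simp
    then have "v t = Some 0 \<and> m = t"
      by (cases "v t") (auto split: if_splits)
    then show ?thesis using all by auto
  next
    case False
    then have "search_code v t = Suc (Suc m)" using Suc.prems by simp
    then show ?thesis using Suc.IH by auto
  qed
qed

lemma search_code_foundI: "m < t \<Longrightarrow> v m = Some 0 \<Longrightarrow> (\<forall>m'<m. \<exists>y. v m' = Some (Suc y))
    \<Longrightarrow> search_code v t = Suc (Suc m)"
proof (induction t)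
  case 0 then show ?case by simp
next
  case (Suc t)
  show ?case
  proof (cases "m < t")
    case True
    then show ?thesis using Suc by simp
  next
    case False
    then have m: "m = t" using Suc.prems by simp
    then have "search_code v t = 0" using Suc.prems search_code_0 by blast
    then show ?thesis using m Suc.prems by simp
  qed
qed

fun beval :: "nat \<Rightarrow> (nat \<Rightarrow> nat option) \<Rightarrow> recf \<Rightarrow> nat list \<Rightarrow> nat option" where
  "beval t orc Zr xs = Some 0"
| "beval t orc Sc xs = (case xs of [] \<Rightarrow> None | x # _ \<Rightarrow> Some (Suc x))"
| "beval t orc (Pj i) xs = (if i < length xs then Some (xs ! i) else None)"
| "beval t orc Orc xs = (case xs of [] \<Rightarrow> None | x # _ \<Rightarrow> orc x)"
| "beval t orc (Cn f gs) xs = (let ys = map (\<lambda>g. beval t orc g xs) gs in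
      if None \<in> set ys then None else beval t orc f (map the ys))"
| "beval t orc (Pr f g) xs = (case xs of [] \<Rightarrow> None | n # ys \<Rightarrow>
      rec_nat (beval t orc f ys) (\<lambda>k r. case r of None \<Rightarrow> None | Some y \<Rightarrow> beval t orc g (k # y # ys)) n)"
| "beval t orc (Mn f) xs = (let s = search_code (\<lambda>m. beval t orc f (m # xs)) t in
      if 2 \<le> s then Some (s - 2) else None)"

definition oracle_le :: "(nat \<Rightarrow> nat option) \<Rightarrow> (nat \<Rightarrow> nat option) \<Rightarrow> bool" where
  "oracle_le o1 o2 \<longleftrightarrow> (\<forall>x y. o1 x = Some y \<longrightarrow> o2 x = Some y)"

lemma beval_sound: "beval t orc c xs = Some y \<Longrightarrow> oracle_le orc (\<lambda>x. Some (a x)) \<Longrightarrow> oev a c xs y"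
proof (induction c arbitrary: xs y)
  case Zr then show ?case by (auto intro: oev_Zr)
next
  case Sc then show ?case by (auto intro: oev_Sc split: list.splits)
next
  case (Pj i) then show ?case by (auto intro: oev_Pj split: if_splits)
next
  case Orc then show ?case by (auto intro: oev_Orc simp: oracle_le_def split: list.splits)
next
  case (Cn f gs)
  let ?ys = "map (\<lambda>g. beval t orc g xs) gs"
  have nn: "None \<notin> set ?ys" and fz: "beval t orc f (map the ?ys) = Some y"
    using Cn.prems(1) by (auto simp: Let_def split: if_splits)
  show ?case
  proof (rule oev_Cn)
    show "length (map the ?ys) = length gs" by simp
    show "\<forall>i<length gs. oev a (gs ! i) xs (map the ?ys ! i)"
    proof (intro allI impI)
      fix i assume i: "i < length gs"
      then have "beval t orc (gs ! i) xs \<noteq> None" using nn by (metis length_map nth_map nth_mem)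
      then have "beval t orc (gs ! i) xs = Some (map the ?ys ! i)" using i by auto
      then show "oev a (gs ! i) xs (map the ?ys ! i)" using Cn.IH(2)[OF nth_mem[OF i]] Cn.prems(2) by blast
    qed
    show "oev a f (map the ?ys) y" using Cn.IH(1)[OF fz Cn.prems(2)] .
  qed
next
  case (Pr f g)
  then obtain n ys where xs: "xs = n # ys" by (cases xs) auto
  have "rec_nat (beval t orc f ys) (\<lambda>k r. case r of None \<Rightarrow> None | Some y \<Rightarrow> beval t orc g
      (k # y # ys)) n = Some y
     \<Longrightarrow> oev a (Pr f g) (n # ys) y" for y
  proof (induction n arbitrary: y)
    case 0 then show ?case using Pr.IH(1) Pr.prems(2) by (auto intro: oev_Pr0)
  next
    case (Suc n)
    then obtain y' where 1: "rec_nat (beval t orc f ys)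
        (\<lambda>k r. case r of None \<Rightarrow> None | Some y \<Rightarrow> beval t orc g (k # y # ys)) n = Some y'"
      and 2: "beval t orc g (n # y' # ys) = Some y" by (auto split: option.splits)
    show ?case using Suc.IH[OF 1] Pr.IH(2)[OF 2 Pr.prems(2)] by (rule oev_PrS)
  qed
  then show ?case using Pr.prems(1) xs by simp
next
  case (Mn f)
  let ?v = "\<lambda>m. beval t orc f (m # xs)"
  from Mn.prems(1) have s: "search_code ?v t = Suc (Suc y)"
    by (auto simp: Let_def split: if_splits)
  from search_code_found[OF s] have 1: "?v y = Some 0" and 2: "\<forall>m'<y. \<exists>z. ?v m' = Some (Suc z)" by auto
  show ?case
  proof (rule oev_Mn)
    show "oev a f (y # xs) 0" using Mn.IH[OF 1 Mn.prems(2)] .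
    show "\<forall>m<y. \<exists>z. z \<noteq> 0 \<and> oev a f (m # xs) z"
    proof (intro allI impI)
      fix m assume "m < y" then obtain z where "?v m = Some (Suc z)" using 2 by blast
      then show "\<exists>z. z \<noteq> 0 \<and> oev a f (m # xs) z" using Mn.IH Mn.prems(2) by blast
    qed
  qed
qed

lemma beval_mono: "beval t orc c xs = Some y \<Longrightarrow> t \<le> t' \<Longrightarrow> oracle_le orc orc' \<Longrightarrow> beval t' orc' c xs = Some y"
proof (induction c arbitrary: xs y)
  case Zr then show ?case by simp
next
  case Sc then show ?case by simp
next
  case (Pj i) then show ?case by simp
next
  case Orc then show ?case by (auto simp: oracle_le_def split: list.splits)
next
  case (Cn f gs)
  let ?ys = "map (\<lambda>g. beval t orc g xs) gs"
  let ?ys' = "map (\<lambda>g. beval t' orc' g xs) gs"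
  have nn: "None \<notin> set ?ys" and fz: "beval t orc f (map the ?ys) = Some y"
    using Cn.prems(1) by (auto simp: Let_def split: if_splits)
  have eq: "?ys' = ?ys"
  proof (rule map_cong[OF refl])
    fix g assume g: "g \<in> set gs"
    then obtain z where "beval t orc g xs = Some z" using nn by force
    then show "beval t' orc' g xs = beval t orc g xs" using Cn.IH(2)[OF g] Cn.prems by simp
  qed
  show ?case using nn Cn.IH(1)[OF fz Cn.prems(2,3)] by (simp add: eq[unfolded Let_def] Let_def)
next
  case (Pr f g)
  then obtain n ys where xs: "xs = n # ys" by (cases xs) auto
  have "rec_nat (beval t orc f ys) (\<lambda>k r. case r of None \<Rightarrow> None | Some y \<Rightarrow> beval t orc g
      (k # y # ys)) n = Some y
     \<Longrightarrow> rec_nat (beval t' orc' f ys) (\<lambda>k r. case r of None \<Rightarrow> None | Some y \<Rightarrow> beval t' orc' g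
         (k # y # ys)) n = Some y" for y
  proof (induction n arbitrary: y)
    case 0 then show ?case using Pr.IH(1) Pr.prems(2,3) by auto
  next
    case (Suc n)
    then obtain y' where 1: "rec_nat (beval t orc f ys)
        (\<lambda>k r. case r of None \<Rightarrow> None | Some y \<Rightarrow> beval t orc g (k # y # ys)) n = Some y'"
      and 2: "beval t orc g (n # y' # ys) = Some y" by (auto split: option.splits)
    show ?case using Suc.IH[OF 1] Pr.IH(2)[OF 2 Pr.prems(2,3)] by simp
  qed
  then show ?case using Pr.prems(1) xs by simp
next
  case (Mn f)
  let ?v = "\<lambda>m. beval t orc f (m # xs)"
  let ?v' = "\<lambda>m. beval t' orc' f (m # xs)"
  from Mn.prems(1) have s: "search_code ?v t = Suc (Suc y)"
    by (auto simp: Let_def split: if_splits)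
  from search_code_found[OF s] have 0: "y < t" and 1: "?v y = Some 0" and 2: "\<forall>m'<y. \<exists>z. ?v m'
      = Some (Suc z)" by auto
  have "search_code ?v' t' = Suc (Suc y)"
  proof (rule search_code_foundI)
    show "y < t'" using 0 Mn.prems(2) by simp
    show "?v' y = Some 0" using Mn.IH[OF 1 Mn.prems(2,3)] .
    show "\<forall>m'<y. \<exists>z. ?v' m' = Some (Suc z)" using 2 Mn.IH Mn.prems(2,3) by blast
  qed
  then show ?case by (simp add: Let_def)
qed

lemma beval_common_bound:
  fixes orcs :: "nat \<Rightarrow> nat \<Rightarrow> nat option" and N :: nat
  assumes orcs_mono: "\<And>k k'. k \<le> k' \<Longrightarrow> oracle_le (orcs k) (orcs k')"
    and each: "\<And>i. i < N \<Longrightarrow> \<exists>t k. beval t (orcs k) (c i) (xs i) = Some (y i)"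
  shows "\<exists>t k. \<forall>i<N. beval t (orcs k) (c i) (xs i) = Some (y i)"
  using each
proof (induction N)
  case 0 then show ?case by simp
next
  case (Suc N)
  have "\<exists>t k. \<forall>i<N. beval t (orcs k) (c i) (xs i) = Some (y i)" by (rule Suc.IH) (simp add: Suc.prems)
  then obtain t k where old: "\<forall>i<N. beval t (orcs k) (c i) (xs i) = Some (y i)" by blast
  obtain t' k' where new: "beval t' (orcs k') (c N) (xs N) = Some (y N)" using Suc.prems by blast
  have "beval (max t t') (orcs (max k k')) (c i) (xs i) = Some (y i)" if "i < Suc N" for i
  proof (cases "i < N")
    case True then show ?thesis using beval_mono[OF old[rule_format, OF True] _ orcs_mono] by simp
  next
    case False then show ?thesis using beval_mono[OF new _ orcs_mono] that by (simp add: less_Suc_eq)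
  qed
  then show ?case by blast
qed

lemma beval_complete:
  fixes orcs :: "nat \<Rightarrow> nat \<Rightarrow> nat option"
  assumes orcs_mono: "\<And>k k'. k \<le> k' \<Longrightarrow> oracle_le (orcs k) (orcs k')"
    and cover: "\<And>x. \<exists>k. orcs k x = Some (a x)"
    and ev: "oev a c xs y"
  shows "\<exists>t k. beval t (orcs k) c xs = Some y"
  using ev
proof (induction rule: oev.induct)
  case (oev_Orc x xs)
  obtain k where "orcs k x = Some (a x)" using cover by blast
  then show ?case by auto
next
  case (oev_Cn ys gs xs f z)
  let ?c = "\<lambda>i. if i < length gs then gs ! i else f"
  let ?xs = "\<lambda>i. if i < length gs then xs else ys"
  let ?y = "\<lambda>i. if i < length gs then ys ! i else z"
  have "\<exists>t k. beval t (orcs k) (?c i) (?xs i) = Some (?y i)" if "i < Suc (length gs)" for i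
    using oev_Cn.IH that by (cases "i < length gs") auto
  then obtain t k where all: "\<forall>i<Suc (length gs). beval t (orcs k) (?c i) (?xs i) = Some (?y i)"
    using beval_common_bound[of orcs "Suc (length gs)" ?c ?xs ?y, OF orcs_mono] by blast
  then have f: "beval t (orcs k) f ys = Some z" by (metis lessI less_irrefl)
  have "map (\<lambda>g. beval t (orcs k) g xs) gs = map Some ys"
  proof (rule nth_equalityI)
    fix i assume "i < length (map (\<lambda>g. beval t (orcs k) g xs) gs)"
    then show "map (\<lambda>g. beval t (orcs k) g xs) gs ! i = map Some ys ! i"
      using all[rule_format, of i] oev_Cn.hyps(1) by simp
  qed (use oev_Cn.hyps(1) in simp)
  then have "beval t (orcs k) (Cn f gs) xs = Some z" using f by (simp add: comp_def)
  then show ?case by blast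
next
  case (oev_PrS f g n xs y z)
  let ?c = "\<lambda>i::nat. if i = 0 then Pr f g else g"
  let ?xs = "\<lambda>i::nat. if i = 0 then n # xs else n # y # xs"
  let ?y = "\<lambda>i::nat. if i = 0 then y else z"
  have "\<exists>t k. beval t (orcs k) (?c i) (?xs i) = Some (?y i)" if "i < 2" for i
    using oev_PrS.IH that by (cases "i = 0") auto
  then obtain t k where "\<forall>i<2. beval t (orcs k) (?c i) (?xs i) = Some (?y i)"
    using beval_common_bound[of orcs 2 ?c ?xs ?y, OF orcs_mono] by blast
  then have "beval t (orcs k) (Pr f g) (n # xs) = Some y" and "beval t (orcs k) g (n # y # xs) = Some z"
    by (auto dest: spec[of _ 0] spec[of _ 1])
  then have "beval t (orcs k) (Pr f g) (Suc n # xs) = Some z" by simp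
  then show ?case by blast
next
  case (oev_Mn f n xs)
  obtain w where w: "\<And>m. m < n \<Longrightarrow> w m \<noteq> 0 \<and> (\<exists>t k. beval t (orcs k) f (m # xs) = Some (w m))"
    using oev_Mn.IH(2) by metis
  let ?y = "\<lambda>m. if m < n then w m else 0"
  have "\<exists>t k. beval t (orcs k) f (m # xs) = Some (?y m)" if "m < Suc n" for m
  proof (cases "m < n")
    case False
    then have "m = n" using that by simp
    then show ?thesis using oev_Mn.IH(1) by auto
  qed (use w in auto)
  then obtain t k where vals: "\<forall>m<Suc n. beval t (orcs k) f (m # xs) = Some (?y m)"
    using beval_common_bound[of orcs "Suc n" "\<lambda>_. f" "\<lambda>m. m # xs" ?y, OF orcs_mono] by blast
  let ?T = "max t (Suc n)"
  let ?v = "\<lambda>m. beval ?T (orcs k) f (m # xs)"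
  have v: "?v m = Some (?y m)" if "m < Suc n" for m
    using beval_mono[OF vals[rule_format, OF that], of ?T] by (simp add: oracle_le_def)
  have "search_code ?v ?T = Suc (Suc n)"
  proof (rule search_code_foundI)
    show "?v n = Some 0" using v[of n] by simp
    show "\<forall>m'<n. \<exists>y. ?v m' = Some (Suc y)"
    proof (intro allI impI)
      fix m assume "m < n"
      then show "\<exists>y. ?v m = Some (Suc y)" using v[of m] w[of m] by (simp add: not0_implies_Suc)
    qed
  qed simp
  then have "beval ?T (orcs k) (Mn f) xs = Some n" by (simp add: Let_def)
  then show ?case by blast
qed auto

section \<open>The bounded evaluator is computable\<close>

text \<open>The program \<open>beval_prog n c\<close> computes, on
  arguments \<open>t # w # xs\<close> with \<open>length xs = n\<close>, the code of \<open>beval t (prefix_oracle a w) c xs\<close>;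
  it is defined by recursion on \<open>c\<close>, mirroring the equations of \<open>beval\<close>.\<close>

definition opt_code :: "nat option \<Rightarrow> nat" where "opt_code v = (case v of None \<Rightarrow> 0 | Some y \<Rightarrow> Suc y)"

definition prefix_oracle :: "baire \<Rightarrow> nat \<Rightarrow> nat \<Rightarrow> nat option" where
  "prefix_oracle a w x = (if even x then Some (a (x div 2))
     else if x div 2 < length (list_decode w) then Some (list_decode w ! (x div 2)) else None)"

definition prefix_oracle_prog :: recf where
  "prefix_oracle_prog = Cn add_prog [Cn mult_prog [Cn is_zero_prog [Cn parity_prog [Pj 1]],
      Cn Sc [Cn Orc [Cn half_prog [Pj 1]]]],
                 Cn mult_prog [Cn parity_prog [Pj 1],
                     Cn mult_prog [Cn code_in_range_prog [Cn half_prog [Pj 1], Pj 0],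
                                             Cn Sc [Cn code_nth_prog [Cn half_prog [Pj 1], Pj 0]]]]]"

lemma computes_prefix_oracle: "computes 2 prefix_oracle_prog (\<lambda>a xs. opt_code (prefix_oracle a
    (xs ! 0) (xs ! 1)))"
proof -
  have x: "computes 2 (Pj 1) (\<lambda>a xs. xs ! 1)" and w: "computes 2 (Pj 0) (\<lambda>a xs. xs ! 0)"
      by (auto intro: computes_Pj)
  have h: "computes 2 (Cn half_prog [Pj 1]) (\<lambda>a xs. xs ! 1 div 2)"
      using computes_Cn1[OF computes_half x] by simp
  have p: "computes 2 (Cn parity_prog [Pj 1]) (\<lambda>a xs. xs ! 1 mod 2)"
      using computes_Cn1[OF computes_parity x] by simp
  note t1 = computes_Cn2[OF computes_mult computes_Cn1[OF computes_is_zero p] computes_Cn1[OF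
      computes_Sc1 computes_Cn1[OF computes_Orc1 h]]]
  note t2 = computes_Cn2[OF computes_mult p computes_Cn2[OF computes_mult computes_Cn2[OF
      computes_code_in_range h w] computes_Cn1[OF computes_Sc1 computes_Cn2[OF
      computes_code_nth h w]]]]
  have main: "computes 2 prefix_oracle_prog (\<lambda>a xs. (if xs ! 1 mod 2
      = 0 then 1 else 0) * Suc (a (xs ! 1 div 2)) +
      xs ! 1 mod 2 * ((if (code_tl ^^ (xs ! 1 div 2)) (xs ! 0) = 0 then 0 else 1) *
         Suc (fst (prod_decode ((code_tl ^^ (xs ! 1 div 2)) (xs ! 0) - 1)))))"
    unfolding prefix_oracle_prog_def using computes_Cn2[OF computes_add t1 t2] by simp
  show ?thesis
  proof (rule computes_cong[OF main])
    fix a :: baire and xs :: "nat list"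
    define w x l where "w = xs ! 0" and "x = xs ! 1" and "l = list_decode w"
    have wl: "w = list_encode l" unfolding l_def by simp
    show "(if xs ! 1 mod 2 = 0 then 1 else 0) * Suc (a (xs ! 1 div 2)) +
      xs ! 1 mod 2 * ((if (code_tl ^^ (xs ! 1 div 2)) (xs ! 0) = 0 then 0 else 1) *
         Suc (fst (prod_decode ((code_tl ^^ (xs ! 1 div 2)) (xs ! 0) - 1))))
             = opt_code (prefix_oracle a (xs ! 0) (xs ! 1))"
      unfolding w_def[symmetric] x_def[symmetric] prefix_oracle_def l_def[symmetric] opt_code_def
      unfolding wl code_in_range
      by (cases "even x") (auto simp: code_nth[simplified])
  qed
qed

fun all_defined_prog :: "recf list \<Rightarrow> recf" where
  "all_defined_prog [] = const_prog 1" | "all_defined_prog (g # gs) = Cn mult_prog [Cn sgn_prog [g],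
      all_defined_prog gs]"

lemma computes_all_defined: "list_all2 (computes n) gs Gs \<Longrightarrow>
  computes n (all_defined_prog gs) (\<lambda>a xs. if (\<forall>G\<in>set Gs. G a xs \<noteq> 0) then 1 else 0)"
proof (induction gs arbitrary: Gs)
  case Nil
  have "computes n (const_prog 1) (\<lambda>a xs. 1)" by (rule computes_const)
  then show ?case using Nil by (simp del: const_prog.simps)
next
  case (Cons g gs)
  then obtain G Gs' where Gs: "Gs = G # Gs'" and g: "computes n g G" and r: "list_all2 (computes n) gs Gs'"
    by (cases Gs) auto
  show ?case unfolding Gs all_defined_prog.simps
    using computes_Cn2[OF computes_mult computes_Cn1[OF computes_sgn g] Cons.IH[OF r]]
        by (rule computes_cong) auto
qed

definition search_hit_prog :: "recf \<Rightarrow> recf" where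
  "search_hit_prog h = Cn add_prog [Cn is_zero_prog [h],
      Cn mult_prog [Cn mult_prog [Cn is_zero_prog [Cn pred_prog [h]], Cn sgn_prog [h]],
      Cn Sc [Cn Sc [Pj 0]]]]"
definition search_step_prog :: "recf \<Rightarrow> recf" where
  "search_step_prog h = Cn add_prog [Cn mult_prog [Cn sgn_prog [Pj 1], Pj 1],
      Cn mult_prog [Cn is_zero_prog [Pj 1], search_hit_prog h]]"

definition search_step :: "nat \<Rightarrow> nat \<Rightarrow> nat \<Rightarrow> nat" where
  "search_step j acc hv = (if acc \<noteq> 0 then acc else if hv = 0 then 1 else if hv = 1 then j + 2 else 0)"

lemma computes_search_step: "computes k h H \<Longrightarrow> 2 \<le> k
    \<Longrightarrow> computes k (search_step_prog h) (\<lambda>a xs. search_step (xs ! 0) (xs ! 1) (H a xs))"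
proof -
  assume h: "computes k h H" and k: "2 \<le> k"
  have p0: "computes k (Pj 0) (\<lambda>a xs. xs ! 0)" and p1: "computes k (Pj 1) (\<lambda>a xs. xs ! 1)"
    using k by (auto intro: computes_Pj)
  note s = computes_Cn2[OF computes_add computes_Cn1[OF computes_is_zero h]
      computes_Cn2[OF computes_mult computes_Cn2[OF computes_mult computes_Cn1[OF computes_is_zero
          computes_Cn1[OF computes_pred h]] computes_Cn1[OF computes_sgn h]]
         computes_Cn1[OF computes_Sc1 computes_Cn1[OF computes_Sc1 p0]]]]
  note m = computes_Cn2[OF computes_add computes_Cn2[OF computes_mult computes_Cn1[OF computes_sgn
      p1] p1] computes_Cn2[OF computes_mult computes_Cn1[OF computes_is_zero p1] s]]
  show ?thesis unfolding search_step_prog_def search_hit_prog_def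
    by (rule computes_cong[OF m]) (auto simp: search_step_def)
qed

fun beval_prog :: "nat \<Rightarrow> recf \<Rightarrow> recf" where
  "beval_prog n Zr = const_prog 1"
| "beval_prog n Sc = (if n = 0 then Zr else Cn Sc [Cn Sc [Pj 2]])"
| "beval_prog n (Pj i) = (if i < n then Cn Sc [Pj (i + 2)] else Zr)"
| "beval_prog n Orc = (if n = 0 then Zr else Cn prefix_oracle_prog [Pj 1, Pj 2])"
| "beval_prog n (Cn f gs) = Cn mult_prog [all_defined_prog (map (beval_prog n) gs),
       Cn (beval_prog (length gs) f) (Pj 0 # Pj 1 # map (\<lambda>g. Cn pred_prog [beval_prog n g]) gs)]"
| "beval_prog n (Pr f g) = (case n of 0 \<Rightarrow> Zr | Suc m \<Rightarrow>
     Cn (Pr (beval_prog m f) (Cn mult_prog [Cn sgn_prog [Pj 1],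
          Cn (beval_prog (Suc (Suc m)) g) (Pj 2 # Pj 3 # Pj 0 # Cn pred_prog [Pj 1] # map Pj [4..<m + 4])]))
       (map Pj (2 # 0 # 1 # [3..<m + 3])))"
| "beval_prog n (Mn f) = Cn sub_prog [Cn (Pr Zr (search_step_prog (Cn (beval_prog (Suc n) f) (map Pj
    (2 # 3 # 0 # [4..<n + 4])))))
       (map Pj (0 # [0..<n + 2])), const_prog 1]"

definition beval_code :: "recf \<Rightarrow> baire \<Rightarrow> nat list \<Rightarrow> nat" where
  "beval_code c a xs = opt_code (beval (xs ! 0) (prefix_oracle a (xs ! 1)) c (drop 2 xs))"

lemma map_nth_upt: "length xs = m + k \<Longrightarrow> map ((!) xs) [k..<m + k] = drop k xs"
  by (rule nth_equalityI) auto

lemma computes_Cn_proj: "computes (length is) f F \<Longrightarrow> (\<forall>i\<in>set is. i < n) \<Longrightarrow>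
   computes n (Cn f (map Pj is)) (\<lambda>a xs. F a (map ((!) xs) is))"
proof -
  assume f: "computes (length is) f F" and i: "\<forall>i\<in>set is. i < n"
  have "list_all2 (computes n) (map Pj is) (map (\<lambda>i a xs. xs ! i) is)"
    using i by (auto simp: list_all2_map1 list_all2_map2 intro!: list.rel_refl_strong computes_Pj)
  from computes_Cn[OF this] f show ?thesis by (simp add: comp_def)
qed

lemma drop2E: "length xs = Suc (Suc n) \<Longrightarrow> (\<And>t w ys. xs = t # w # ys \<Longrightarrow> length ys = n \<Longrightarrow> Q) \<Longrightarrow> Q"
  by (cases xs; cases "tl xs") auto

lemma search_code_rec: "rec_nat 0 (\<lambda>j acc. search_step j acc (opt_code (v j))) t = search_code v t"
  by (induction t) (auto simp: search_step_def opt_code_def split: option.splits)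

lemma beval_code_simp: "beval_code c a (t # w # ys) = opt_code (beval t (prefix_oracle a w) c ys)"
  by (simp add: beval_code_def)

lemma beval_code_Cn: "(if \<forall>G\<in>set (map beval_code gs). G a xs \<noteq> 0 then 1 else 0) *
    beval_code f a (xs ! 0 # xs ! 1 # map (\<lambda>g. beval_code g a xs - 1) gs) = beval_code (Cn f gs) a xs"
proof (cases "\<forall>g\<in>set gs. beval (xs ! 0) (prefix_oracle a (xs ! 1)) g (drop 2 xs) \<noteq> None")
  case True
  then have 1: "\<forall>G\<in>set (map beval_code gs). G a xs \<noteq> 0"
      by (auto simp: beval_code_def opt_code_def split: option.split)
  have eqm: "map (\<lambda>g. beval_code g a xs - 1) gs
      = map the (map (\<lambda>g. beval (xs ! 0) (prefix_oracle a (xs ! 1)) g (drop 2 xs)) gs)"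
    using True by (auto simp: beval_code_def opt_code_def split: option.split)
  have 3: "None \<notin> set (map (\<lambda>g. beval (xs ! 0) (prefix_oracle a (xs ! 1)) g (drop 2 xs)) gs)"
    using True by auto
  show ?thesis unfolding eqm using 1 3 by (simp add: beval_code_def Let_def)
next
  case False
  then obtain g where g: "g \<in> set gs" "beval (xs ! 0) (prefix_oracle a (xs ! 1)) g (drop 2 xs) = None" by auto
  then have "beval_code g a xs = 0" by (simp add: beval_code_def opt_code_def)
  moreover have "None \<in> set (map (\<lambda>g. beval (xs ! 0) (prefix_oracle a (xs ! 1)) g (drop 2 xs)) gs)"
    using g by force
  ultimately show ?thesis using g by (auto simp: beval_code_def opt_code_def Let_def)
qed

lemma pr_rec: "rec_nat (opt_code A) (\<lambda>k y. (if y = 0 then 0 else 1) * opt_code (B k (y - 1))) x =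
   opt_code (rec_nat A (\<lambda>k r. case r of None \<Rightarrow> None | Some y \<Rightarrow> B k y) x)"
  by (induction x) (auto simp: opt_code_def split: option.split)

lemma beval_prog_Zr: "computes (Suc (Suc n)) (beval_prog n Zr) (beval_code Zr)"
  unfolding beval_prog.simps
  by (rule computes_cong[OF computes_const[of _ 1]]) (simp add: beval_code_def opt_code_def)

lemma beval_prog_Sc: "computes (Suc (Suc n)) (beval_prog n Sc) (beval_code Sc)"
proof (cases n)
  case 0
  then show ?thesis by simp (rule computes_cong[OF computes_Zr],
      auto simp: beval_code_def opt_code_def elim!: drop2E)
next
  case (Suc m)
  have "computes (Suc (Suc n)) (Cn Sc [Cn Sc [Pj 2]]) (\<lambda>a xs. Suc (Suc (xs ! 2)))"
    using computes_Cn1[OF computes_Sc1 computes_Cn1[OF computes_Sc1 computes_Pj[of 2 "Suc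
        (Suc n)"]]] Suc by simp
  then show ?thesis using Suc
    by simp (rule computes_cong, assumption,
        auto simp: beval_code_def opt_code_def elim!: drop2E split: list.split)
qed

lemma beval_prog_Pj: "computes (Suc (Suc n)) (beval_prog n (Pj i)) (beval_code (Pj i))"
proof (cases "i < n")
  case True
  have "computes (Suc (Suc n)) (Cn Sc [Pj (i + 2)]) (\<lambda>a xs. Suc (xs ! (i + 2)))"
    using computes_Cn1[OF computes_Sc1 computes_Pj[of "i + 2" "Suc (Suc n)"]] True by simp
  then show ?thesis using True
    by simp (rule computes_cong, assumption, auto simp: beval_code_def opt_code_def elim!: drop2E)
next
  case False
  then show ?thesis by simp (rule computes_cong[OF computes_Zr],
      auto simp: beval_code_def opt_code_def elim!: drop2E)
qed

lemma beval_prog_Orc: "computes (Suc (Suc n)) (beval_prog n Orc) (beval_code Orc)"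
proof (cases n)
  case 0
  then show ?thesis by simp (rule computes_cong[OF computes_Zr],
      auto simp: beval_code_def opt_code_def elim!: drop2E)
next
  case (Suc m)
  have "computes (Suc (Suc n)) (Cn prefix_oracle_prog [Pj 1,
      Pj 2]) (\<lambda>a xs. opt_code (prefix_oracle a (xs ! 1) (xs ! 2)))"
    using computes_Cn2[OF computes_prefix_oracle computes_Pj[of 1 "Suc (Suc n)"] computes_Pj[of 2
        "Suc (Suc n)"]] Suc by simp
  then show ?thesis using Suc
    by simp (rule computes_cong, assumption,
        auto simp: beval_code_def opt_code_def elim!: drop2E split: list.split)
qed

lemma beval_prog_Cn:
  assumes f: "\<And>n. computes (Suc (Suc n)) (beval_prog n f) (beval_code f)"
    and gs: "\<And>g n. g \<in> set gs \<Longrightarrow> computes (Suc (Suc n)) (beval_prog n g) (beval_code g)"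
  shows "computes (Suc (Suc n)) (beval_prog n (Cn f gs)) (beval_code (Cn f gs))"
proof -
  have defined: "list_all2 (computes (Suc (Suc n))) (map (beval_prog n) gs) (map beval_code gs)"
    using gs by (auto simp: list_all2_map1 list_all2_map2 intro!: list.rel_refl_strong)
  have arguments: "list_all2 (computes (Suc (Suc n))) (Pj 0 # Pj 1 # map (\<lambda>g. Cn pred_prog
      [beval_prog n g]) gs)
        ((\<lambda>a xs. xs ! 0) # (\<lambda>a xs. xs ! 1) # map (\<lambda>g a xs. beval_code g a xs - 1) gs)"
    using computes_Cn1[OF computes_pred gs]
    by (auto simp: list_all2_map1 list_all2_map2 intro!: list.rel_refl_strong computes_Pj)
  have len: "length (Pj 0 # Pj 1 # map (\<lambda>g. Cn pred_prog [beval_prog n g]) gs) = Suc (Suc (length gs))"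
    by simp
  have outer: "computes (Suc (Suc n))
      (Cn (beval_prog (length gs) f) (Pj 0 # Pj 1 # map (\<lambda>g. Cn pred_prog [beval_prog n g]) gs))
      (\<lambda>a xs. beval_code f a (xs ! 0 # xs ! 1 # map (\<lambda>g. beval_code g a xs - 1) gs))"
    using computes_Cn[OF arguments f[of "length gs", folded len]] by (simp add: comp_def)
  show ?thesis unfolding beval_prog.simps
    using computes_Cn2[OF computes_mult computes_all_defined[OF defined] outer]
    by (rule computes_cong) (use beval_code_Cn in simp)
qed

lemma beval_prog_Pr_step:
  assumes g: "computes (Suc (Suc (Suc (Suc m)))) (beval_prog (Suc (Suc m)) g) (beval_code g)"
  shows "computes (Suc (Suc (Suc (Suc m))))
      (Cn mult_prog [Cn sgn_prog [Pj 1],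
         Cn (beval_prog (Suc (Suc m)) g) (Pj 2 # Pj 3 # Pj 0 # Cn pred_prog [Pj 1] # map Pj [4..<m + 4])])
      (\<lambda>a xs. (if xs ! 1 = 0 then 0 else 1) *
         beval_code g a (xs ! 2 # xs ! 3 # xs ! 0 # (xs ! 1 - 1) # drop 4 xs))"
proof -
  define k where "k = Suc (Suc (Suc (Suc m)))"
  have args: "list_all2 (computes k) (Pj 2 # Pj 3 # Pj 0 # Cn pred_prog [Pj 1] # map Pj [4..<m + 4])
      ((\<lambda>a xs. xs ! 2) # (\<lambda>a xs. xs ! 3) # (\<lambda>a xs. xs ! 0) # (\<lambda>a xs. xs ! 1 - 1) #
         map (\<lambda>i a xs. xs ! i) [4..<m + 4])"
    using computes_Cn1[OF computes_pred computes_Pj[of 1 k]] unfolding k_def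
    by (auto simp: list_all2_map1 list_all2_map2 intro!: list.rel_refl_strong computes_Pj)
  have len: "length (Pj 2 # Pj 3 # Pj 0 # Cn pred_prog [Pj 1] # map Pj [4..<m + 4]) = Suc (Suc (Suc (Suc m)))"
    by simp
  have inner: "computes k (Cn (beval_prog (Suc (Suc m)) g) (Pj 2 # Pj 3 # Pj 0 # Cn pred_prog
      [Pj 1] # map Pj [4..<m + 4]))
       (\<lambda>a xs. beval_code g a (xs ! 2 # xs ! 3 # xs ! 0 # (xs ! 1 - 1) # drop 4 xs))"
    using computes_Cn[OF args g[folded len]]
    by (rule computes_cong) (simp add: comp_def map_nth_upt k_def)
  show ?thesis
    using computes_Cn2[OF computes_mult computes_Cn1[OF computes_sgn computes_Pj[of 1 k]] inner]
    unfolding k_def by simp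
qed

lemma beval_prog_Pr:
  assumes f: "\<And>n. computes (Suc (Suc n)) (beval_prog n f) (beval_code f)"
    and g: "\<And>n. computes (Suc (Suc n)) (beval_prog n g) (beval_code g)"
  shows "computes (Suc (Suc n)) (beval_prog n (Pr f g)) (beval_code (Pr f g))"
proof (cases n)
  case 0
  then show ?thesis
    by simp (rule computes_cong[OF computes_Zr], auto simp: beval_code_def opt_code_def elim!: drop2E)
next
  case (Suc m)
  have len: "length (2 # 0 # 1 # [3..<m + 3]) = Suc (Suc (Suc m))" by simp
  have idx: "\<forall>i\<in>set (2 # 0 # 1 # [3..<m + 3]). i < Suc (Suc (Suc m))" by auto
  note rec = computes_Pr'[OF f[of m] beval_prog_Pr_step[OF g[of "Suc (Suc m)"]] refl]
  note recursion = computes_Cn_proj[OF rec[folded len] idx]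
  show ?thesis unfolding beval_prog.simps Suc nat.case
    apply (rule computes_cong[OF recursion])
    subgoal premises l for a xs
    proof -
      obtain t w x ys where xs: "xs = t # w # x # ys" and "length ys = m"
        using l by (metis drop2E length_Suc_conv)
      then have "map ((!) xs) (2 # 0 # 1 # [3..<m + 3]) = x # t # w # ys"
        using map_nth_upt[of xs m 3] l by simp
      then show ?thesis
        using pr_rec[of "beval t (prefix_oracle a w) f ys" "\<lambda>k y. beval t (prefix_oracle a w) g
            (k # y # ys)" x]
        by (simp add: beval_code_simp xs)
    qed
    done
qed

lemma beval_prog_Mn_search:
  assumes f: "computes (Suc (Suc (Suc n))) (beval_prog (Suc n) f) (beval_code f)"
  shows "computes (Suc (Suc n))
     (Cn (Pr Zr (search_step_prog (Cn (beval_prog (Suc n) f) (map Pj (2 # 3 # 0 # [4..<n + 4])))))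
       (map Pj (0 # [0..<n + 2])))
     (\<lambda>a xs. search_code (\<lambda>m. beval (xs ! 0) (prefix_oracle a (xs ! 1)) f (m # drop 2 xs)) (xs ! 0))"
proof -
  have len: "length (2 # 3 # 0 # [4..<n + 4]) = Suc (Suc (Suc n))" by simp
  have test: "computes (Suc (Suc (Suc (Suc n)))) (Cn (beval_prog (Suc n) f) (map Pj (2 # 3 # 0 #
      [4..<n + 4])))
     (\<lambda>a xs. beval_code f a (xs ! 2 # xs ! 3 # xs ! 0 # drop 4 xs))"
    using computes_Cn_proj[OF f[folded len], of "Suc (Suc (Suc (Suc n)))"]
    by (rule computes_cong) (auto simp: map_nth_upt)
  have arity: "2 \<le> Suc (Suc (Suc (Suc n)))" by simp
  note step = computes_search_step[OF test arity]
  have len2: "length (0 # [0..<n + 2]) = Suc (Suc (Suc n))" by simp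
  have idx: "\<forall>i\<in>set (0 # [0..<n + 2]). i < Suc (Suc n)" by auto
  note search = computes_Cn_proj[OF computes_Pr'[OF computes_Zr[of "Suc (Suc n)"] step refl, folded len2] idx]
  show ?thesis
    apply (rule computes_cong[OF search])
    subgoal premises l for a xs
    proof -
      obtain t w ys where xs: "xs = t # w # ys" using l by (metis drop2E)
      have "map ((!) xs) (0 # [0..<n + 2]) = t # xs"
        using map_nth_upt[of xs "n + 2" 0] l xs by simp
      then show ?thesis by (simp add: xs beval_code_simp search_code_rec)
    qed
    done
qed

lemma beval_prog_Mn:
  assumes f: "\<And>n. computes (Suc (Suc n)) (beval_prog n f) (beval_code f)"
  shows "computes (Suc (Suc n)) (beval_prog n (Mn f)) (beval_code (Mn f))"
  unfolding beval_prog.simps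
  using computes_Cn2[OF computes_sub beval_prog_Mn_search[OF f] computes_const[of _ 1]]
  by (rule computes_cong) (auto simp: beval_code_def opt_code_def Let_def elim!: drop2E)

lemma beval_prog_correct: "computes (Suc (Suc n)) (beval_prog n c) (beval_code c)"
proof (induction c arbitrary: n)
  case (Cn f gs) then show ?case by (intro beval_prog_Cn) blast+
next
  case (Pr f g) then show ?case by (rule beval_prog_Pr)
next
  case (Mn f) then show ?case by (rule beval_prog_Mn)
qed (simp_all only: beval_prog_Zr beval_prog_Sc beval_prog_Pj beval_prog_Orc)

text \<open>\<open>relativize c\<close> runs \<open>c\<close> with every oracle query \<open>x\<close> redirected to \<open>2 x\<close>; on the
  oracle \<open>pair p r\<close> it therefore behaves like \<open>c\<close> on the oracle \<open>p\<close>.\<close>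
fun relativize :: "recf \<Rightarrow> recf" where
  "relativize Zr = Zr" | "relativize Sc = Sc" | "relativize (Pj i) = Pj i"
| "relativize Orc = Cn Orc [Cn add_prog [Pj 0, Pj 0]]"
| "relativize (Cn f gs) = Cn (relativize f) (map relativize gs)"
| "relativize (Pr f g) = Pr (relativize f) (relativize g)"
| "relativize (Mn f) = Mn (relativize f)"

definition even_part :: "baire \<Rightarrow> baire" where "even_part s = (\<lambda>i. s (i + i))"
definition odd_part :: "baire \<Rightarrow> baire" where "odd_part s = (\<lambda>i. s (Suc (i + i)))"

lemma even_part_pair: "even_part (pair p r) = p" and odd_part_pair: "odd_part (pair p r) = r"
  by (auto simp: even_part_def odd_part_def pair_def)

lemma relativize_oev: "oev (even_part s) c xs y \<Longrightarrow> oev s (relativize c) xs y"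
proof (induction rule: oev.induct)
  case (oev_Zr xs) then show ?case by (simp add: oev.oev_Zr)
next
  case (oev_Sc x xs) then show ?case by (simp add: oev.oev_Sc)
next
  case (oev_Pj i xs) then show ?case by (simp add: oev.oev_Pj)
next
  case (oev_Orc x xs)
  have r: "computes (Suc (length xs)) (Cn Orc [Cn add_prog [Pj 0, Pj 0]]) (\<lambda>a ys. a (ys ! 0 + ys ! 0))"
    using computes_Cn1[OF computes_Orc1 computes_Cn2[OF computes_add computes_Pj[of 0 "Suc
        (length xs)"] computes_Pj[of 0 "Suc (length xs)"]]]
    by simp
  show ?case using computes_oev[OF r, of "x # xs" s] by (simp add: even_part_def)
next
  case (oev_Cn ys gs xs f z)
  show ?case unfolding relativize.simps
  proof (rule oev.oev_Cn[of ys])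
    show "length ys = length (map relativize gs)" using oev_Cn.hyps(1) by simp
    show "\<forall>i<length (map relativize gs). oev s (map relativize gs ! i) xs (ys ! i)" using oev_Cn.IH(1) by simp
    show "oev s (relativize f) ys z" by (rule oev_Cn.IH(2))
  qed
next
  case (oev_Pr0 f xs y g) then show ?case by (simp add: oev.oev_Pr0)
next
  case (oev_PrS f g n xs y z) then show ?case using oev.oev_PrS by simp
next
  case (oev_Mn f n xs)
  show ?case unfolding relativize.simps
  proof (rule oev.oev_Mn)
    show "oev s (relativize f) (n # xs) 0" using oev_Mn.IH(1) .
    show "\<forall>m<n. \<exists>y. y \<noteq> 0 \<and> oev s (relativize f) (m # xs) y" using oev_Mn.IH(2) by blast
  qed
qed

section \<open>Evaluating names of closed sets\<close>

text \<open>If \<open>K\<close> is computable then so is \<open>\<langle>p, r\<rangle> \<mapsto> eta_{K p}(r)\<close>: \<open>seqcode_prog\<close> computes codes of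
  prefixes of the odd half of the oracle, \<open>eta_test_prog\<close> tests whether a prefix is long enough,
  and \<open>eta_apply_prog\<close> searches for the shortest such prefix and reads off the value.\<close>

definition prefix_step_prog :: recf where
  "prefix_step_prog = Cn Sc [Cn prod_encode_prog [Cn Orc [Cn Sc [Cn add_prog [Cn pred_prog
      [Cn sub_prog [Pj 2, Pj 0]], Cn pred_prog [Cn sub_prog [Pj 2, Pj 0]]]]], Pj 1]]"
definition prefix_rec_prog :: recf where
  "prefix_rec_prog = Pr Zr prefix_step_prog"
definition seqcode_prog :: recf where
  "seqcode_prog = Cn prefix_rec_prog [Pj 0, Pj 0]"

text \<open>The code of a prefix of length \<open>kk\<close> of the odd half of the oracle, built by primitive
  recursion from its last entry backwards.\<close>
lemma prefix_rec: "j \<le> kk \<Longrightarrow> rec_nat 0 (\<lambda>j acc. Suc (prod_encode (a (Suc ((kk - j - 1) +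
    (kk - j - 1))), acc))) j
   = list_encode (map (\<lambda>i. a (Suc (i + i))) [kk - j..<kk])"
proof (induction j)
  case 0 then show ?case by simp
next
  case (Suc j)
  have 1: "[kk - Suc j..<kk] = (kk - Suc j) # [Suc (kk - Suc j)..<kk]"
    by (rule upt_conv_Cons) (use Suc.prems in arith)
  have 2: "Suc (kk - Suc j) = kk - j" using Suc.prems by arith
  have 3: "kk - j - 1 = kk - Suc j" by arith
  have IH: "rec_nat 0 (\<lambda>j acc. Suc (prod_encode (a (Suc ((kk - j - 1) + (kk - j - 1))), acc))) j
     = list_encode (map (\<lambda>i. a (Suc (i + i))) [kk - j..<kk])" using Suc by simp
  show ?case unfolding 1 2 by (simp only: old.nat.rec(2) 3 IH list.map list_encode.simps)
qed

lemma computes_seqcode: "computes 1 seqcode_prog (\<lambda>a xs. seqcode (odd_part a) (xs ! 0))"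
proof -
  have d: "computes 3 (Cn pred_prog [Cn sub_prog [Pj 2, Pj 0]]) (\<lambda>a xs. xs ! 2 - xs ! 0 - 1)"
    using computes_Cn1[OF computes_pred computes_Cn2[OF computes_sub computes_Pj[of 2 3]
        computes_Pj[of 0 3]]] by simp
  have g: "computes 3 prefix_step_prog (\<lambda>a xs. Suc (prod_encode (a (Suc ((xs ! 2 - xs ! 0 - 1) +
      (xs ! 2 - xs ! 0 - 1))), xs ! 1)))"
    unfolding prefix_step_prog_def using computes_Cn1[OF computes_Sc1 computes_Cn2[OF
        computes_prod_encode computes_Cn1[OF computes_Orc1 computes_Cn1[OF computes_Sc1
        computes_Cn2[OF computes_add d d]]] computes_Pj[of 1 3]]]
    by simp
  have r: "computes (Suc 1) prefix_rec_prog (\<lambda>a xs. rec_nat 0 (\<lambda>k y. Suc (prod_encode (a (Suc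
      ((tl xs ! 0 - k - 1) + (tl xs ! 0 - k - 1))), y))) (hd xs))"
    unfolding prefix_rec_prog_def using computes_Pr'[OF computes_Zr[of 1] g] by simp
  have s: "computes 2 prefix_rec_prog (\<lambda>a xs. rec_nat 0 (\<lambda>k y. Suc (prod_encode (a (Suc
      ((xs ! 1 - k - 1) + (xs ! 1 - k - 1))), y))) (xs ! 0))"
    by (rule computes_cong2[OF r]) (auto elim!: len2E)
  show ?thesis unfolding seqcode_prog_def
  proof (rule computes_cong[OF computes_Cn2[OF s computes_Pj[of 0 1] computes_Pj[of 0 1]]])
    fix a :: baire and xs :: "nat list"
    show "rec_nat 0 (\<lambda>k y. Suc (prod_encode (a (Suc (([xs ! 0, xs ! 0] ! 1 - k - 1) + ([xs ! 0,
        xs ! 0] ! 1 - k - 1))), y))) ([xs ! 0, xs ! 0] ! 0) =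
      seqcode (odd_part a) (xs ! 0)"
      using prefix_rec[of "xs ! 0" "xs ! 0" a] by (simp add: seqcode_def odd_part_def)
  qed simp_all
qed

definition eta_test_prog :: "recf \<Rightarrow> recf" where
  "eta_test_prog cK = Cn is_zero_prog [Cn (relativize cK) [Cn prod_encode_prog [Pj 1,
      Cn seqcode_prog [Pj 0]]]]"
definition eta_apply_prog :: "recf \<Rightarrow> recf" where
  "eta_apply_prog cK = Cn pred_prog [Cn (relativize cK) [Cn prod_encode_prog [Pj 0,
      Cn seqcode_prog [Mn (eta_test_prog cK)]]]]"

lemma eta_test_oev:
  assumes k: "\<And>m. oev (even_part s) cK [m] (kq m)"
  shows "oev s (eta_test_prog cK) [kk, n] (if kq (prod_encode (n,
      seqcode (odd_part s) kk)) = 0 then 1 else 0)"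
proof -
  have pe: "oev s (Cn prod_encode_prog [Pj 1, Cn seqcode_prog [Pj 0]]) [kk, n] (prod_encode (n,
      seqcode (odd_part s) kk))"
    using computes_oev[OF computes_Cn2[OF computes_prod_encode computes_Pj[of 1 2] computes_Cn1[OF
        computes_seqcode computes_Pj[of 0 2]]], of "[kk, n]" s] by simp
  have r: "oev s (Cn (relativize cK) [Cn prod_encode_prog [Pj 1, Cn seqcode_prog [Pj 0]]]) [kk,
      n] (kq (prod_encode (n, seqcode (odd_part s) kk)))"
    by (rule oev_Cn1[OF pe relativize_oev[OF k]])
  show ?thesis unfolding eta_test_prog_def
    by (rule oev_Cn1[OF r]) (use computes_oev[OF computes_is_zero, of "[kq (prod_encode (n,
        seqcode (odd_part s) kk))]" s] in simp)
qed

lemma eta_apply_oev: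
  assumes k: "\<And>m. oev (even_part s) cK [m] (kq m)"
    and e: "eta kq (odd_part s) = Some q"
  shows "oev s (eta_apply_prog cK) [n] (q n)"
proof -
  let ?r = "odd_part s"
  have ex: "\<forall>n. \<exists>k. 0 < kq (prod_encode (n, seqcode ?r k))"
    and q: "q = (\<lambda>n. kq (prod_encode (n, seqcode ?r (LEAST k. 0 < kq (prod_encode (n, seqcode ?r k))))) - 1)"
    using e unfolding eta_def by (auto split: if_splits)
  obtain k0 where k0: "0 < kq (prod_encode (n, seqcode ?r k0))" using ex by blast
  define L where "L = (LEAST k. 0 < kq (prod_encode (n, seqcode ?r k)))"
  have eqL: "(LEAST m. (if kq (prod_encode (n, seqcode ?r m)) = 0 then 1 else 0::nat) = 0) = L"
    unfolding L_def by (rule arg_cong[where f = Least]) auto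
  have mn: "oev s (Mn (eta_test_prog cK)) [n] L"
    using oev_Mn_Least[of s "eta_test_prog cK" "[n]" "\<lambda>m. if kq (prod_encode (n,
        seqcode ?r m)) = 0 then 1 else 0" k0]
      eta_test_oev[OF k] k0 unfolding eqL by simp
  have sq: "oev s (Cn seqcode_prog [Mn (eta_test_prog cK)]) [n] (seqcode ?r L)"
    by (rule oev_Cn1[OF mn]) (use computes_oev[OF computes_seqcode, of "[L]" s] in simp)
  have pe: "oev s (Cn prod_encode_prog [Pj 0,
      Cn seqcode_prog [Mn (eta_test_prog cK)]]) [n] (prod_encode (n, seqcode ?r L))"
    by (rule oev_Cn2[OF _ sq]) (use computes_oev[OF computes_prod_encode, of "[n,
        seqcode ?r L]" s] oev_Pj[of 0 "[n]" s] in simp_all)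
  have r: "oev s (Cn (relativize cK) [Cn prod_encode_prog [Pj 0,
      Cn seqcode_prog [Mn (eta_test_prog cK)]]]) [n] (kq (prod_encode (n, seqcode ?r L)))"
    by (rule oev_Cn1[OF pe relativize_oev[OF k]])
  have "oev s (eta_apply_prog cK) [n] (kq (prod_encode (n, seqcode ?r L)) - 1)"
    unfolding eta_apply_prog_def
    by (rule oev_Cn1[OF r]) (use computes_oev[OF computes_pred, of "[kq (prod_encode (n,
        seqcode ?r L))]" s] in simp)
  then show ?thesis unfolding q L_def by simp
qed

lemma computable_eta_compose:
  assumes "computable K"
  shows "computable (\<lambda>s. case K (even_part s) of None \<Rightarrow> None | Some k \<Rightarrow> eta k (odd_part s))"
proof -
  obtain cK where cK: "\<And>p q. K p = Some q \<Longrightarrow> \<forall>n. oev p cK [n] (q n)"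
    using assms unfolding computable_def by blast
  show ?thesis unfolding computable_def
  proof (rule exI[of _ "eta_apply_prog cK"], intro allI impI)
    fix s q n assume "(case K (even_part s) of None \<Rightarrow> None | Some k \<Rightarrow> eta k (odd_part s)) = Some q"
    then obtain kq where kq: "K (even_part s) = Some kq" and e: "eta kq (odd_part s) = Some q"
      by (auto split: option.splits)
    show "oev s (eta_apply_prog cK) [n] (q n)" using eta_apply_oev[OF _ e] cK[OF kq] by blast
  qed
qed

section \<open>Names of sections of computable functions\<close>

text \<open>For the program \<open>c\<close> of a computable \<open>F\<close>, \<open>section_name c p\<close> is a name of
  \<open>r \<mapsto> F \<langle>p, r\<rangle>\<close>: on \<open>\<langle>n, w\<rangle>\<close> it runs \<open>c\<close> for \<open>w\<close> steps on input \<open>n\<close> with the oracle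
  \<open>p\<close> interleaved with the finite prefix coded by \<open>w\<close>.  Bounded evaluation on prefixes is sound
  and eventually complete, which gives both the eta-equation and the closedness of the zero set.\<close>

lemma prefix_oracle_seqcode: "prefix_oracle p (seqcode r k) x = (if even x then Some (p (x div 2))
    else if x div 2 < k then Some (r (x div 2)) else None)"
  by (simp add: prefix_oracle_def seqcode_def)

lemma len_le_list_encode: "length l \<le> list_encode l"
proof (induction l)
  case Nil then show ?case by simp
next
  case (Cons x l)
  have "list_encode l \<le> prod_encode (x, list_encode l)" by (rule le_prod_encode_2)
  then show ?case using Cons by simp
qed

lemma k_le_seqcode: "k \<le> seqcode r k"
  using len_le_list_encode[of "map r [0..<k]"] by (simp add: seqcode_def)

text \<open>Bounded evaluation with the prefix oracle of \<open>r\<close> is sound for \<open>pair p r\<close>, and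
  succeeds for all sufficiently long prefixes (the prefix length also bounds the search).\<close>
lemma beval_prefix_sound: "beval t (prefix_oracle p (seqcode r k)) c xs = Some y \<Longrightarrow> oev (pair p r) c xs y"
  by (rule beval_sound) (auto simp: oracle_le_def prefix_oracle_seqcode pair_def split: if_splits)

lemma beval_prefix_complete:
  assumes "oev (pair p r) c xs y"
  shows "\<exists>K0. \<forall>k\<ge>K0. beval (seqcode r k) (prefix_oracle p (seqcode r k)) c xs = Some y"
proof -
  have mono: "oracle_le (prefix_oracle p (seqcode r k)) (prefix_oracle p (seqcode r k'))" if "k \<le> k'" for k k'
    using that by (auto simp: oracle_le_def prefix_oracle_seqcode)
  have cover: "\<exists>k. prefix_oracle p (seqcode r k) x = Some (pair p r x)" for x
    by (rule exI[of _ "Suc (x div 2)"]) (simp add: prefix_oracle_seqcode pair_def)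
  obtain t k where tk: "beval t (prefix_oracle p (seqcode r k)) c xs = Some y"
    using beval_complete[of "\<lambda>k. prefix_oracle p (seqcode r k)", OF mono cover assms] by blast
  show ?thesis
  proof (intro exI allI impI)
    fix k' assume k': "max t k \<le> k'"
    show "beval (seqcode r k') (prefix_oracle p (seqcode r k')) c xs = Some y"
    proof (rule beval_mono[OF tk])
      show "t \<le> seqcode r k'" using k' k_le_seqcode[of k' r] by simp
      show "oracle_le (prefix_oracle p (seqcode r k)) (prefix_oracle p (seqcode r k'))" using k'
          by (intro mono) simp
    qed
  qed
qed

definition name_prog :: "recf \<Rightarrow> recf" where
  "name_prog c = Cn (beval_prog 1 c) [Cn decode_snd_prog [Pj 0], Cn decode_snd_prog [Pj 0],
      Cn decode_fst_prog [Pj 0]]"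
definition section_name :: "recf \<Rightarrow> baire \<Rightarrow> nat \<Rightarrow> nat" where
  "section_name c p m = beval_code c p [snd (prod_decode m), snd (prod_decode m), fst (prod_decode m)]"

lemma computes_name_prog: "computes 1 (name_prog c) (\<lambda>a xs. section_name c a (xs ! 0))"
proof -
  have pp: "computes 3 (beval_prog 1 c) (beval_code c)" using beval_prog_correct[of 1 c]
      by (simp add: eval_nat_numeral)
  have s: "computes 1 (Cn decode_snd_prog [Pj 0]) (\<lambda>a xs. snd (prod_decode (xs ! 0)))"
    using computes_Cn1[OF computes_decode_snd computes_Pj[of 0 1]] by simp
  have f: "computes 1 (Cn decode_fst_prog [Pj 0]) (\<lambda>a xs. fst (prod_decode (xs ! 0)))"
    using computes_Cn1[OF computes_decode_fst computes_Pj[of 0 1]] by simp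
  show ?thesis unfolding name_prog_def section_name_def using computes_Cn3[OF pp s s f] by simp
qed

lemma section_name_prod_encode: "section_name c p (prod_encode (n,
    w)) = opt_code (beval w (prefix_oracle p w) c [n])"
  by (simp add: section_name_def beval_code_simp)

lemma eta_section_name:
  assumes q: "\<And>n. oev (pair p r) c [n] (q n)"
  shows "eta (section_name c p) r = Some q"
proof -
  have pos: "0 < section_name c p (prod_encode (n, seqcode r k)) \<Longrightarrow>
      section_name c p (prod_encode (n, seqcode r k)) - 1 = q n" for n k
  proof -
    assume "0 < section_name c p (prod_encode (n, seqcode r k))"
    then obtain y where y: "beval (seqcode r k) (prefix_oracle p (seqcode r k)) c [n] = Some y"
      by (auto simp: section_name_prod_encode opt_code_def split: option.splits)
    have "y = q n" using oev_deterministic[OF beval_prefix_sound[OF y] q] .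
    then show ?thesis using y by (simp add: section_name_prod_encode opt_code_def)
  qed
  have ex: "\<forall>n. \<exists>k. 0 < section_name c p (prod_encode (n, seqcode r k))"
  proof
    fix n
    obtain K0 where "\<forall>k\<ge>K0. beval (seqcode r k) (prefix_oracle p (seqcode r k)) c [n] = Some (q n)"
      using beval_prefix_complete[OF q] by blast
    then have "0 < section_name c p (prod_encode (n, seqcode r K0))"
        by (simp add: section_name_prod_encode opt_code_def)
    then show "\<exists>k. 0 < section_name c p (prod_encode (n, seqcode r k))" ..
  qed
  have "(\<lambda>n. section_name c p (prod_encode (n,
      seqcode r (LEAST k. 0 < section_name c p (prod_encode (n, seqcode r k))))) - 1) = q"
  proof
    fix n
    from ex obtain k where "0 < section_name c p (prod_encode (n, seqcode r k))" by blast
    then have "0 < section_name c p (prod_encode (n,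
        seqcode r (LEAST k. 0 < section_name c p (prod_encode (n, seqcode r k)))))"
      by (rule LeastI)
    then show "section_name c p (prod_encode (n,
        seqcode r (LEAST k. 0 < section_name c p (prod_encode (n, seqcode r k))))) - 1 = q n"
      by (rule pos)
  qed
  then show ?thesis using ex unfolding eta_def by simp
qed

lemma computable_section_names:
  assumes "computable F"
  shows "\<exists>K. computable K \<and> (\<forall>p. \<exists>k. K p = Some k \<and> (\<forall>r q. F (pair p r) = Some q \<longrightarrow> eta k r = Some q))"
proof -
  obtain c where c: "\<And>s q. F s = Some q \<Longrightarrow> \<forall>n. oev s c [n] (q n)"
    using assms unfolding computable_def by blast
  have "computable (\<lambda>p. Some (section_name c p))" unfolding computable_def
  proof (rule exI[of _ "name_prog c"], intro allI impI)
    fix p q n assume "Some (section_name c p) = Some q"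
    then show "oev p (name_prog c) [n] (q n)" using computes_oev[OF computes_name_prog, of "[n]" p c] by simp
  qed
  moreover have "eta (section_name c p) r = Some q" if "F (pair p r) = Some q" for p r q
    using eta_section_name c[OF that] by blast
  ultimately show ?thesis by blast
qed

lemma beval_prefix_determined:
  assumes "beval t (prefix_oracle p (seqcode r k)) c xs = Some y" and "\<forall>i<k. r' i = r i"
  shows "oev (pair p r') c xs y"
proof -
  have "map r' [0..<k] = map r [0..<k]" using assms(2) by (intro map_cong) auto
  then have "seqcode r' k = seqcode r k" unfolding seqcode_def by (rule arg_cong)
  then show ?thesis using beval_prefix_sound assms(1) by metis
qed

text \<open>The zero set of the sections of a computable function into Sierpinski space is closed
  in \<open>R\<close>, since a nonzero output is already witnessed on a basic open neighbourhood.\<close>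
lemma closed_zero_set:
  assumes F: "computable F" and total: "\<forall>r\<in>R. F (pair p r) \<noteq> None"
  shows "closedin (top_of_set R) {r \<in> R. \<not> delta_S (the (F (pair p r)))}"
proof -
  obtain c where c: "\<And>s q. F s = Some q \<Longrightarrow> \<forall>n. oev s c [n] (q n)"
    using F unfolding computable_def by blast
  define S where "S = {r \<in> R. \<not> delta_S (the (F (pair p r)))}"
  have "\<exists>T. openin (top_of_set R) T \<and> r \<in> T \<and> T \<subseteq> R - S" if r: "r \<in> R - S" for r
  proof -
    obtain q where q: "F (pair p r) = Some q" using total r by auto
    with r obtain n where qn: "q n \<noteq> 0" by (auto simp: S_def delta_S_def)
    obtain k where k: "\<forall>k'\<ge>k. beval (seqcode r k') (prefix_oracle p (seqcode r k')) c [n] = Some (q n)"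
      using beval_prefix_complete[of p r c "[n]" "q n"] c[OF q] by blast
    define U where "U = {r' :: baire. \<forall>i\<in>{..<k}. r' ((\<lambda>i. i) i) \<in> {r i}}"
    have "open U" unfolding U_def by (rule product_topology_basis') (auto intro: open_discrete)
    moreover have "R \<inter> U \<subseteq> R - S"
    proof
      fix r' assume r': "r' \<in> R \<inter> U"
      obtain q' where q': "F (pair p r') = Some q'" using total r' by auto
      have "oev (pair p r') c [n] (q n)"
        by (rule beval_prefix_determined[OF k[rule_format, OF order.refl]]) (use r' in \<open>auto simp: U_def\<close>)
      then have "q' n = q n" using c[OF q'] oev_deterministic by blast
      then show "r' \<in> R - S" using r' q' qn by (auto simp: S_def delta_S_def)
    qed
    ultimately show ?thesis using r by (intro exI[of _ "R \<inter> U"]) (auto simp: U_def openin_open_Int)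
  qed
  then have "openin (top_of_set R) (R - S)" by (subst openin_subopen) blast
  moreover have "S \<subseteq> R" unfolding S_def by blast
  ultimately show ?thesis
    unfolding closedin_def S_def[symmetric] topspace_euclidean_subtopology by (rule conjI[rotated])
qed

lemma PC_nonempty: "PC \<mu> R I A \<noteq> {} \<Longrightarrow> PC \<mu> R I A = A \<and> A \<noteq> {} \<and> A \<subseteq> R \<and>
   closedin (top_of_set R) A \<and> enn2ereal (emeasure \<mu> A) \<in> I"
  unfolding PC_def by (auto split: if_splits)

lemma PC_intro: "A \<noteq> {} \<Longrightarrow> A \<subseteq> R \<Longrightarrow> closedin (top_of_set R) A \<Longrightarrow> enn2ereal (emeasure \<mu> A) \<in> I
   \<Longrightarrow> PC \<mu> R I A = A"
  unfolding PC_def by auto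

lemma realizes_update:
  assumes G: "realizes \<delta>X \<delta>Y f G"
    and q: "\<And>x. \<delta>X p = Some x \<Longrightarrow> f x \<noteq> {} \<Longrightarrow> \<exists>y. \<delta>Y q = Some y \<and> y \<in> f x"
  shows "realizes \<delta>X \<delta>Y f (G(p := Some q))"
  using assms unfolding realizes_def by auto

lemma strict_realizer_exists:
  assumes named: "\<And>p x. \<delta>X p = Some x \<Longrightarrow> f x \<noteq> {} \<Longrightarrow> \<exists>q y. \<delta>Y q = Some y \<and> y \<in> f x"
  shows "\<exists>G. realizes \<delta>X \<delta>Y f G \<and> (\<forall>p. G p \<noteq> None \<longrightarrow> (\<exists>x. \<delta>X p = Some x \<and> f x \<noteq> {}))"
proof -
  define G where "G p = (if \<exists>x. \<delta>X p = Some x \<and> f x \<noteq> {}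
      then Some (SOME q. \<exists>y. \<delta>Y q = Some y \<and> y \<in> f (the (\<delta>X p))) else None)" for p
  have "realizes \<delta>X \<delta>Y f G" unfolding realizes_def
  proof (intro allI impI)
    fix p x assume px: "\<delta>X p = Some x \<and> f x \<noteq> {}"
    then have x: "the (\<delta>X p) = x" by simp
    have "\<exists>y. \<delta>Y (SOME q. \<exists>y. \<delta>Y q = Some y \<and> y \<in> f x) = Some y \<and> y \<in> f x"
      by (rule someI_ex[of "\<lambda>q. \<exists>y. \<delta>Y q = Some y \<and> y \<in> f x"]) (use named px in blast)
    then show "\<exists>q y. G p = Some q \<and> \<delta>Y q = Some y \<and> y \<in> f x" using px by (auto simp: G_def x)
  qed
  then show ?thesis by (auto simp: G_def split: if_splits)
qed

lemma PC_strict_realizer: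
  "\<exists>G. realizes (delta_closed R) (delta_sub R) (PC \<mu> R I) G \<and>
     (\<forall>k. G k \<noteq> None \<longrightarrow> (\<exists>A. delta_closed R k = Some A \<and> PC \<mu> R I A \<noteq> {}))"
proof (rule strict_realizer_exists)
  fix k A assume "PC \<mu> R I A \<noteq> {}"
  then obtain r where "r \<in> PC \<mu> R I A" by blast
  then show "\<exists>q y. delta_sub R q = Some y \<and> y \<in> PC \<mu> R I A"
    using PC_nonempty[of \<mu> R I A] by (auto simp: delta_sub_def)
qed

section \<open>The two directions of the theorem\<close>

text \<open>The success set is
  the closed set named by \<open>K p\<close>; every point of it is a possible answer of a realizer.\<close>
lemma W_to_LV:
  assumes W: "weihrauch_le \<delta>X \<delta>Y f (delta_closed R) (delta_sub R) (PC \<mu>R R I)"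
  shows "las_vegas \<delta>X \<delta>Y f R \<mu>R I"
proof -
  obtain H K where cH: "computable H" and cK: "computable K" and
    real: "\<And>G. realizes (delta_closed R) (delta_sub R) (PC \<mu>R R I) G \<Longrightarrow>
       realizes \<delta>X \<delta>Y f (\<lambda>p. case K p of None \<Rightarrow> None
                      | Some k \<Rightarrow> (case G k of None \<Rightarrow> None | Some q \<Rightarrow> H (pair p q)))"
    using W unfolding weihrauch_le_def by blast
  define F2 where "F2 s = (case K (even_part s) of None \<Rightarrow> None | Some k \<Rightarrow> eta k (odd_part s))" for s
  have cF2: "computable F2" unfolding F2_def by (rule computable_eta_compose[OF cK])
  obtain G0 where G0: "realizes (delta_closed R) (delta_sub R) (PC \<mu>R R I) G0"
    and strict: "\<And>k. G0 k \<noteq> None \<Longrightarrow> \<exists>A. delta_closed R k = Some A \<and> PC \<mu>R R I A \<noteq> {}"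
    using PC_strict_realizer by blast
  have "(\<forall>r\<in>R. F2 (pair p r) \<noteq> None) \<and>
      (let S = {r \<in> R. \<not> delta_S (the (F2 (pair p r)))} in S \<noteq> {} \<and> enn2ereal (emeasure \<mu>R S) \<in> I \<and>
        (\<forall>r\<in>S. \<exists>q y. H (pair p r) = Some q \<and> \<delta>Y q = Some y \<and> y \<in> f x))"
    if px: "\<delta>X p = Some x \<and> f x \<noteq> {}" for p x
  proof -
    from real[OF G0] px obtain q0 where
      "(case K p of None \<Rightarrow> None | Some k \<Rightarrow> (case G0 k of None \<Rightarrow> None | Some q \<Rightarrow> H (pair p q))) = Some q0"
      unfolding realizes_def by blast
    then obtain k where Kp: "K p = Some k" and "G0 k \<noteq> None" by (auto split: option.splits)
    then obtain A where kA: "delta_closed R k = Some A" and PA: "PC \<mu>R R I A \<noteq> {}" using strict by blast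
    from kA have total: "\<forall>r\<in>R. eta k r \<noteq> None" and A: "A = {r \<in> R. \<not> delta_S (the (eta k r))}"
      unfolding delta_closed_def by (auto split: if_splits)
    have F2_pair: "F2 (pair p r) = eta k r" for r by (simp add: F2_def even_part_pair odd_part_pair Kp)
    have answer: "\<exists>q y. H (pair p r) = Some q \<and> \<delta>Y q = Some y \<and> y \<in> f x" if rA: "r \<in> A" for r
    proof -
      have "r \<in> PC \<mu>R R I A" and "r \<in> R" using rA PC_nonempty[OF PA] by auto
      then have "realizes (delta_closed R) (delta_sub R) (PC \<mu>R R I) (G0(k := Some r))"
        using kA by (intro realizes_update[OF G0]) (auto simp: delta_sub_def)
      from real[OF this] px obtain q y where
        "(case K p of None \<Rightarrow> None | Some k' \<Rightarrow>
           (case (G0(k := Some r)) k' of None \<Rightarrow> None | Some q \<Rightarrow> H (pair p q))) = Some q"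
        and "\<delta>Y q = Some y" "y \<in> f x"
        unfolding realizes_def by blast
      then show ?thesis using Kp by auto
    qed
    have "A \<noteq> {}" and "enn2ereal (emeasure \<mu>R A) \<in> I" using PC_nonempty[OF PA] by auto
    then show ?thesis unfolding F2_pair A[symmetric] Let_def using total answer by blast
  qed
  then show ?thesis unfolding las_vegas_def using cH cF2 by blast
qed

text \<open>From a Las Vegas algorithm \<open>(F1, F2)\<close>: take \<open>H = F1\<close> and \<open>K p\<close> a name of
  \<open>r \<mapsto> F2 \<langle>p, r\<rangle>\<close>, which names the (closed) success set of \<open>p\<close>.\<close>
lemma LV_to_W:
  assumes LV: "las_vegas \<delta>X \<delta>Y f R \<mu>R I"
  shows "weihrauch_le \<delta>X \<delta>Y f (delta_closed R) (delta_sub R) (PC \<mu>R R I)"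
proof -
  obtain F1 F2 where c1: "computable F1" and c: "computable F2" and
    lv: "\<And>p x. \<delta>X p = Some x \<and> f x \<noteq> {} \<Longrightarrow>
           (\<forall>r\<in>R. F2 (pair p r) \<noteq> None) \<and>
           (let S = {r \<in> R. \<not> delta_S (the (F2 (pair p r)))} in
              S \<noteq> {} \<and> enn2ereal (emeasure \<mu>R S) \<in> I \<and>
              (\<forall>r\<in>S. \<exists>q y. F1 (pair p r) = Some q \<and> \<delta>Y q = Some y \<and> y \<in> f x))"
    using LV unfolding las_vegas_def by blast
  obtain K where cK: "computable K"
    and K: "\<And>p. \<exists>k. K p = Some k \<and> (\<forall>r q. F2 (pair p r) = Some q \<longrightarrow> eta k r = Some q)"
    using computable_section_names[OF c] by blast
  have "realizes \<delta>X \<delta>Y f (\<lambda>p. case K p of None \<Rightarrow> None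
                      | Some k \<Rightarrow> (case G k of None \<Rightarrow> None | Some q \<Rightarrow> F1 (pair p q)))"
    if G: "realizes (delta_closed R) (delta_sub R) (PC \<mu>R R I) G" for G
    unfolding realizes_def
  proof (intro allI impI)
    fix p x assume px: "\<delta>X p = Some x \<and> f x \<noteq> {}"
    define S where "S = {r \<in> R. \<not> delta_S (the (F2 (pair p r)))}"
    have total: "\<forall>r\<in>R. F2 (pair p r) \<noteq> None" and S: "S \<noteq> {}" "enn2ereal (emeasure \<mu>R S) \<in> I"
      and good: "\<forall>r\<in>S. \<exists>q y. F1 (pair p r) = Some q \<and> \<delta>Y q = Some y \<and> y \<in> f x"
      using lv[OF px] unfolding S_def Let_def by auto
    obtain k where Kp: "K p = Some k" and eta_k: "\<And>r q. F2 (pair p r) = Some q \<Longrightarrow> eta k r = Some q"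
      using K by blast
    have eta_F2: "eta k r = F2 (pair p r)" if "r \<in> R" for r
      using total eta_k that by fastforce
    then have "{r \<in> R. \<not> delta_S (the (eta k r))} = S" by (auto simp: S_def)
    then have kS: "delta_closed R k = Some S"
      using total eta_F2 unfolding delta_closed_def by simp
    have "PC \<mu>R R I S = S"
      using S closed_zero_set[OF c total] by (intro PC_intro) (auto simp: S_def)
    then obtain q y where Gk: "G k = Some q" and "delta_sub R q = Some y" and "y \<in> S"
      using G kS S(1) unfolding realizes_def by metis
    then have "q \<in> S" by (simp add: delta_sub_def split: if_splits)
    with Gk show "\<exists>q y. (case K p of None \<Rightarrow> None
                      | Some k \<Rightarrow> (case G k of None \<Rightarrow> None | Some q \<Rightarrow> F1 (pair p q))) = Some q \<and>
                   \<delta>Y q = Some y \<and> y \<in> f x"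
      using good Kp by auto
  qed
  then show ?thesis unfolding weihrauch_le_def using c1 cK by blast
qed

theorem theorem3p5:
  fixes X :: "'x set" and \<delta>X :: "baire \<Rightarrow> 'x option"
    and Y :: "'y set" and \<delta>Y :: "baire \<Rightarrow> 'y option"
    and f :: "'x \<Rightarrow> 'y set"
    and R :: "baire set" and \<mu>R :: "baire measure" and I :: "ereal set"
  assumes "represented X \<delta>X" and "represented Y \<delta>Y"
    and "\<forall>x\<in>X. f x \<subseteq> Y"
    and "sets \<mu>R = sets (restrict_space borel R)"
    and "is_interval_ext I"
  shows "weihrauch_le \<delta>X \<delta>Y f (delta_closed R) (delta_sub R) (PC \<mu>R R I)
         \<longleftrightarrow> las_vegas \<delta>X \<delta>Y f R \<mu>R I"
  using W_to_LV LV_to_W by blast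

end
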